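(* Let $(\Gamma,\mathcal M)$ be a linear matrix problem with $\Gamma\subset k^{t\times t}$, and let the free and dependent positions and the coefficients $c^{(l,r)}_{ij}$ be as in the context. Then for every step-sequence $\underline n$, the space $\mathcal M_{\underline n\times\underline n}$ consists of all $\underline n\times\underline n$ matrices $[M_{ij}]_{i,j=1}^t$ whose free blocks are arbitrary and whose dependent blocks are given by $M_{lr}=\sum_{(i,j)\in\mathcal N_f}c^{(l,r)}_{ij}M_{ij}$ for $(l,r)\in\mathcal N_d$. Moreover, when Belitskiĭ's algorithm is applied to $M\in\mathcal M_{\underline n\times\underline n}$ with $\Lambda=\Gamma_{\underline n\times\underline n}$, at each step the block that is reduced (the first non-stable block of the current partition) is a subblock of a free block $M_{ij}$, $(i,j)\in\mathcal N_f$, of $M$.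
   Context: Throughout, $k$ is an algebraically closed field with a fixed linear order $\prec$. For $\underline n=(n_1,\dots,n_t)$, an $\underline n\times\underline n$ matrix is $M=[M_{ij}]$ with $M_{ij}\in k^{n_i\times n_j}$. A reduced $\underline n\times\underline n$ algebra is an algebra $\Lambda$ of $\underline n\times\underline n$ matrices for which there are an equivalence relation $\sim$ on $\{1,\dots,t\}$ and, for each pair of classes $(\mathcal I,\mathcal J)$, a system $\sum_{\mathcal I\ni i<j\in\mathcal J}c^{(l)}_{ij}x_{ij}=0$, such that $\Lambda$ is exactly the set of upper block-triangular $S$ with $S_{ii}=S_{jj}$ for $i\sim j$ and $\sum c^{(l)}_{ij}S_{ij}=0$. $\Lambda^*$: invertible elements. Weyr matrices: $W=W_{\{\lambda_1\}}\oplus\dots\oplus W_{\{\lambda_r\}}$, $\lambda_1\prec\dots\prec\lambda_r$, $W_{\{\lambda_i\}}$ block upper triangular with diagonal blocks $\lambda_iI_{m_{i1}},\dots,\lambda_iI_{m_{ik_i}}$ ($m_{i1}\ge\dots\ge m_{ik_i}\ge1$), superdiagonal blocks $\begin{bmatrix}I\\0\end{bmatrix}$, other blocks $0$; standard partition: for $W_{\{\lambda_i\}}$, block sizes $m_{i1}-m_{i2},\dots,m_{ik_i};\ m_{i2}-m_{i3},\dots,m_{ik_i};\dots;m_{ik_i}$ with zeros removed. Belitskiĭ's algorithm for $(M,\Lambda)$: a block $M_{ij}$ is stable if $(S^{-1}MS)_{ij}=M_{ij}$ for all $S\in\Lambda^*$ (then $M_{ij}=a_{ij}I$ if $i\sim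 j$, $M_{ij}=0=:a_{ij}$ otherwise). If all blocks are stable, stop. Else order blocks $M_{t1}<\dots<M_{tt}<M_{t-1,1}<\dots<M_{1t}$, take the first non-stable block $M_{lr}$ (this is the block reduced at this step), with classes $\mathcal I\ni l,\mathcal J\ni r$, and let $( * )$ be $a_{l1}S_{1r}+\dots+a_{l,r-1}S_{r-1,r}=S_{l,l+1}a_{l+1,r}+\dots+S_{lt}a_{tr}$. Case I ($( * )$ not implied by the equations of $\Lambda$ for $(\mathcal I,\mathcal J)$): $M'=S^{-1}MS$, $S\in\Lambda^*$ with identity diagonal blocks, $M'_{lr}=0$; partition unchanged. Case II ($( * )$ implied, $l\not\sim r$): $M'=S^{-1}MS$ with $M'_{lr}=\begin{bmatrix}0&I\\0&0\end{bmatrix}$; strips equivalent to $l$ (resp. $r$) subdivided conformally with the rows (resp. columns) of this block. Case III ($( * )$ implied, $l\sim r$): $M'=S^{-1}MS$ with $M'_{lr}$ a Weyr matrix; strips equivalent to $l$ subdivided by its standard partition. Then $\Lambda'=\{S\in\Lambda\mid(SM')_{lr}=(M'S)_{lr}\}$ (reduced for the refined partition); repeat with $(M',\Lambda')$ until all blocks are stable. Linear matrix problems. A basic matrix algebra is a subalgebra $\Gamma\subset k^{t\times t}$ (with $I_t$) of upper triangular matrices containing the diagonal part of each of its elements; it is a reduced $(1,\dots,1)\times(1,\dots,1)$ algebra with an equivalence relation $\sim$ and equations. A linear matrix problem is a pair $(\Gamma,\mathcal M)$, $\mathcal M\subset k^{t\times t}$ a subspace with $\Gamma\mathcal M,\mathcal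 M\Gamma\subset\mathcal M$; $\mathcal M$ is the set of all $[m_{ij}]$ satisfying a linear system whose equations each involve only unknowns $x_{ij}$ with $(i,j)\in\mathcal I\times\mathcal J$ for one pair of classes. A step-sequence is $\underline n$ with $n_i=n_j$ for $i\sim j$; $\Gamma_{\underline n\times\underline n}$ is the reduced $\underline n\times\underline n$ algebra with the same $\sim$ and equations as $\Gamma$; $\mathcal M_{\underline n\times\underline n}$ is the space of $\underline n\times\underline n$ matrices whose blocks satisfy the system defining $\mathcal M$ (with blocks $M_{ij}$ in place of $x_{ij}$). Free and dependent blocks. Order the unknowns as $x_{t1}\lhd x_{t2}\lhd\dots\lhd x_{tt}\lhd x_{t-1,1}\lhd\dots\lhd x_{t-1,t}\lhd\dots\lhd x_{1t}$. Gauss–Jordan elimination of the system defining $\mathcal M$, eliminating starting with the $\lhd$-last unknown, brings it to the form $x_{lr}=\sum_{(i,j)\in\mathcal N_f}c^{(l,r)}_{ij}x_{ij}$, $(l,r)\in\mathcal N_d$, where $\mathcal N_d\cup\mathcal N_f=\{1,\dots,t\}^2$, $\mathcal N_d\cap\mathcal N_f=\varnothing$, and $c^{(l,r)}_{ij}\ne0$ implies $i\sim l$, $j\sim r$ and $x_{ij}\lhd x_{lr}$. A block $M_{ij}$ of an $\underline n\times\underline n$ matrix is free if $(i,j)\in\mathcal N_f$ and dependent if $(i,j)\in\mathcal N_d$. *)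

theory Defs
  imports "Jordan_Normal_Form.Matrix" "HOL-Computational_Algebra.Polynomial"
begin

text \<open>The field k is algebraically closed; its fixed linear order is the type-class order.\<close>
definition alg_closed :: "('a::field) itself \<Rightarrow> bool" where
  "alg_closed _ \<longleftrightarrow> (\<forall>p :: 'a poly. degree p \<ge> 1 \<longrightarrow> (\<exists>x. poly p x = 0))"

section \<open>Block structure of matrices (0-based strip indices)\<close>

definition off :: "nat list \<Rightarrow> nat \<Rightarrow> nat" where
  "off ns i = sum_list (take i ns)"

definition blk :: "nat list \<Rightarrow> 'a mat \<Rightarrow> nat \<Rightarrow> nat \<Rightarrow> 'a mat" where
  "blk ns M i j = mat (ns ! i) (ns ! j) (\<lambda>(p, q). M $$ (off ns i + p, off ns j + q))"

definition bent :: "nat list \<Rightarrow> 'a::zero mat \<Rightarrow> nat \<Rightarrow> nat \<Rightarrow> nat \<Rightarrow> nat \<Rightarrow> 'a" where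
  "bent ns M i j p q = (if p < ns ! i \<and> q < ns ! j then M $$ (off ns i + p, off ns j + q) else 0)"

definition one_class_pair :: "(nat \<times> nat) set \<Rightarrow> nat \<Rightarrow> (nat \<Rightarrow> nat \<Rightarrow> 'a::zero) \<Rightarrow> bool" where
  "one_class_pair E t c \<longleftrightarrow> (\<exists>i0 j0. \<forall>i j. c i j \<noteq> 0 \<longrightarrow>
      i < t \<and> j < t \<and> (i0, i) \<in> E \<and> (j0, j) \<in> E)"

definition blk_sol :: "nat list \<Rightarrow> (nat \<Rightarrow> nat \<Rightarrow> 'a::comm_ring_1) set \<Rightarrow> 'a mat \<Rightarrow> bool" where
  "blk_sol ns eqs S \<longleftrightarrow> (\<forall>c\<in>eqs. \<forall>p q.
      (\<Sum>i<length ns. \<Sum>j<length ns. c i j * bent ns S i j p q) = 0)"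

definition red_alg :: "nat list \<Rightarrow> (nat \<times> nat) set \<Rightarrow> (nat \<Rightarrow> nat \<Rightarrow> 'a::comm_ring_1) set \<Rightarrow> 'a mat set" where
  "red_alg ns E eqs = {S \<in> carrier_mat (sum_list ns) (sum_list ns).
      (\<forall>i j. j < i \<and> i < length ns \<longrightarrow> blk ns S i j = 0\<^sub>m (ns ! i) (ns ! j)) \<and>
      (\<forall>(i, j)\<in>E. blk ns S i i = blk ns S j j) \<and>
      blk_sol ns eqs S}"

definition Mnn :: "nat list \<Rightarrow> (nat \<Rightarrow> nat \<Rightarrow> 'a::comm_ring_1) set \<Rightarrow> 'a mat set" where
  "Mnn ns eqs = {M \<in> carrier_mat (sum_list ns) (sum_list ns). blk_sol ns eqs M}"

definition step_seq :: "nat \<Rightarrow> (nat \<times> nat) set \<Rightarrow> nat list \<Rightarrow> bool" where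
  "step_seq t E ns \<longleftrightarrow> length ns = t \<and> (\<forall>(i, j)\<in>E. ns ! i = ns ! j)"

definition unk_less :: "nat \<times> nat \<Rightarrow> nat \<times> nat \<Rightarrow> bool" where
  "unk_less x y \<longleftrightarrow> fst x > fst y \<or> (fst x = fst y \<and> snd x < snd y)"

fun locate :: "nat list \<Rightarrow> nat \<Rightarrow> nat \<times> nat" where
  "locate [] p = (0, p)"
| "locate (m # ms) p = (if p < m then (0, p) else (let (j, d) = locate ms (p - m) in (Suc j, d)))"

text \<open>W_{lambda}: diagonal blocks lambda I_{m_1},...,lambda I_{m_k}, superdiagonal blocks [I;0].\<close>
definition weyr_block :: "'a::{zero,one} \<Rightarrow> nat list \<Rightarrow> 'a mat" where
  "weyr_block lam ms = mat (sum_list ms) (sum_list ms) (\<lambda>(p, q).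
     (let (a, p') = locate ms p; (b, q') = locate ms q in
      if p' = q' \<and> a = b then lam else if p' = q' \<and> b = Suc a then 1 else 0))"

definition weyr_mat :: "('a::{zero,one} \<times> nat list) list \<Rightarrow> 'a mat" where
  "weyr_mat ws = (let sz = map (\<lambda>w. sum_list (snd w)) ws in
     mat (sum_list sz) (sum_list sz) (\<lambda>(p, q).
       (let (a, p') = locate sz p; (b, q') = locate sz q in
        if a = b then weyr_block (fst (ws ! a)) (snd (ws ! a)) $$ (p', q') else 0)))"

definition weyr_data :: "('a::linorder \<times> nat list) list \<Rightarrow> bool" where
  "weyr_data ws \<longleftrightarrow> sorted_wrt (<) (map fst ws) \<and>
     (\<forall>w\<in>set ws. snd w \<noteq> [] \<and> sorted_wrt (\<ge>) (snd w) \<and> 0 \<notin> set (snd w))"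

text \<open>Standard partition: for each W_{lambda} with m_1 >= ... >= m_k, the j-th diagonal block
  is split into m_j - m_{j+1}, ..., m_{k-1} - m_k, m_k; zeros removed.\<close>
definition std_part_block :: "nat list \<Rightarrow> nat list" where
  "std_part_block ms = filter (\<lambda>x. x \<noteq> 0) (concat (map (\<lambda>j.
      map (\<lambda>i. ms ! i - (if Suc i < length ms then ms ! Suc i else 0)) [j..<length ms])
      [0..<length ms]))"

definition std_part :: "('a \<times> nat list) list \<Rightarrow> nat list" where
  "std_part ws = concat (map (\<lambda>w. std_part_block (snd w)) ws)"

text \<open>State: (strip sizes, the algebra Lambda as a set of matrices, the matrix M).\<close>

definition stable :: "nat list \<Rightarrow> 'a::field mat set \<Rightarrow> 'a mat \<Rightarrow> nat \<Rightarrow> nat \<Rightarrow> bool" where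
  "stable ns L M i j \<longleftrightarrow> (\<forall>S\<in>L. \<forall>M'\<in>carrier_mat (sum_list ns) (sum_list ns).
      invertible_mat S \<and> S * M' = M * S \<longrightarrow> blk ns M' i j = blk ns M i j)"

definition block_order :: "nat \<Rightarrow> (nat \<times> nat) list" where
  "block_order t = concat (map (\<lambda>i. map (\<lambda>j. (i, j)) [0..<t]) (rev [0..<t]))"

definition first_nonstable :: "nat list \<Rightarrow> 'a::field mat set \<Rightarrow> 'a mat \<Rightarrow> (nat \<times> nat) option" where
  "first_nonstable ns L M = find (\<lambda>(i, j). \<not> stable ns L M i j) (block_order (length ns))"

definition strip_eqv :: "nat list \<Rightarrow> 'a mat set \<Rightarrow> nat \<Rightarrow> nat \<Rightarrow> bool" where
  "strip_eqv ns L i j \<longleftrightarrow> i < length ns \<and> j < length ns \<and> ns ! i = ns ! j \<and>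
      (\<forall>S\<in>L. blk ns S i i = blk ns S j j)"

text \<open>Equation (*) for S, with the stable blocks M_{li} = a_{li} I (or 0) written as blocks:
  M_{l1} S_{1r} + ... + M_{l,r-1} S_{r-1,r} = S_{l,l+1} M_{l+1,r} + ... + S_{lt} M_{tr}.\<close>
definition star_eq :: "nat list \<Rightarrow> 'a::field mat \<Rightarrow> nat \<Rightarrow> nat \<Rightarrow> 'a mat \<Rightarrow> bool" where
  "star_eq ns M l r S \<longleftrightarrow> (\<forall>p < ns ! l. \<forall>q < ns ! r.
      (\<Sum>i<r. (blk ns M l i * blk ns S i r) $$ (p, q)) =
      (\<Sum>j\<in>{l<..<length ns}. (blk ns S l j * blk ns M j r) $$ (p, q)))"

text \<open>(*) is implied by the equations of L (for the relevant pair of classes).\<close>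
definition star_implied :: "nat list \<Rightarrow> 'a::field mat set \<Rightarrow> 'a mat \<Rightarrow> nat \<Rightarrow> nat \<Rightarrow> bool" where
  "star_implied ns L M l r \<longleftrightarrow> (\<forall>S\<in>L. star_eq ns M l r S)"

text \<open>The m x n matrix [0 I; 0 0] with I of size rho.\<close>
definition zi_mat :: "nat \<Rightarrow> nat \<Rightarrow> nat \<Rightarrow> 'a::{zero,one} mat" where
  "zi_mat m n rho = mat m n (\<lambda>(p, q). if p < rho \<and> q = n - rho + p then 1 else 0)"

definition refine :: "nat list \<Rightarrow> (nat \<Rightarrow> nat list) \<Rightarrow> nat list" where
  "refine ns parts = concat (map parts [0..<length ns])"

inductive bel_step :: "nat list \<times> 'a::{field,linorder} mat set \<times> 'a mat
    \<Rightarrow> nat list \<times> 'a mat set \<times> 'a mat \<Rightarrow> bool" where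
  case_I:
  "\<lbrakk> first_nonstable ns L M = Some (l, r);
     \<not> star_implied ns L M l r;
     S \<in> L; invertible_mat S; M' \<in> carrier_mat (sum_list ns) (sum_list ns); S * M' = M * S;
     \<forall>i < length ns. blk ns S i i = 1\<^sub>m (ns ! i);
     blk ns M' l r = 0\<^sub>m (ns ! l) (ns ! r);
     L' = {T \<in> L. blk ns (T * M') l r = blk ns (M' * T) l r} \<rbrakk>
   \<Longrightarrow> bel_step (ns, L, M) (ns, L', M')"
| case_II:
  "\<lbrakk> first_nonstable ns L M = Some (l, r);
     star_implied ns L M l r; \<not> strip_eqv ns L l r;
     S \<in> L; invertible_mat S; M' \<in> carrier_mat (sum_list ns) (sum_list ns); S * M' = M * S;
     rho \<le> ns ! l; rho \<le> ns ! r;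
     blk ns M' l r = zi_mat (ns ! l) (ns ! r) rho;
     ns' = refine ns (\<lambda>i. if strip_eqv ns L l i then filter (\<lambda>x. x \<noteq> 0) [rho, ns ! l - rho]
                         else if strip_eqv ns L r i then filter (\<lambda>x. x \<noteq> 0) [ns ! r - rho, rho]
                         else [ns ! i]);
     L' = {T \<in> L. blk ns (T * M') l r = blk ns (M' * T) l r} \<rbrakk>
   \<Longrightarrow> bel_step (ns, L, M) (ns', L', M')"
| case_III:
  "\<lbrakk> first_nonstable ns L M = Some (l, r);
     star_implied ns L M l r; strip_eqv ns L l r;
     S \<in> L; invertible_mat S; M' \<in> carrier_mat (sum_list ns) (sum_list ns); S * M' = M * S;
     weyr_data ws; blk ns M' l r = weyr_mat ws;
     ns' = refine ns (\<lambda>i. if strip_eqv ns L l i then std_part ws else [ns ! i]);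
     L' = {T \<in> L. blk ns (T * M') l r = blk ns (M' * T) l r} \<rbrakk>
   \<Longrightarrow> bel_step (ns, L, M) (ns', L', M')"

end

(*
  Everything is done slice by slice: the (p, q)-th slice of a block matrix partitioned by ns is
  the t x t matrix formed by the (p, q)-th entries of its blocks. Sums and products of block
  matrices are computed slicewise, and a block matrix satisfies the block equations of M
  (of Gamma) iff all its slices satisfy the scalar ones. Hence the Gauss-Jordan description of M
  carries over to M_{n x n}, Gamma_{n x n} is a matrix algebra (so it contains the inverses of its
  invertible elements) and M_{n x n} is a Gamma_{n x n}-bimodule.

  Along Belitskii's algorithm the current partition refines n with equivalent strips split
  alike, the current algebra stays inside Gamma_{n x n}, and the current matrix, being conjugate
  to its predecessor by an element of Gamma_{n x n}, stays in M_{n x n}. A subblock of a dependent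
  block M_lr is then the fixed linear combination of the corresponding subblocks of the free
  blocks M_ij with x_ij before x_lr. These come earlier in the block order, so they are already
  stable when the dependent subblock is reached, and then so is the dependent subblock itself.
*)

theory Submission
  imports Defs "Jordan_Normal_Form.Determinant"
begin

section \<open>Strip offsets and slices\<close>

declare One_nat_def [simp del] \<comment> \<open>keeps the strip sizes replicate t 1 intact\<close>

lemma off_eq_sum: "i \<le> length ns \<Longrightarrow> off ns i = (\<Sum>k<i. ns ! k)"
  by (simp add: off_def sum_list_sum_nth atLeast0LessThan)

lemma sum_list_eq_sum: "sum_list ns = (\<Sum>k<length ns. ns ! k)"
  by (simp add: sum_list_sum_nth atLeast0LessThan)

lemma off_add_nth_le_off:
  assumes "i < j" "j \<le> length ns"
  shows "off ns i + ns ! i \<le> off ns j"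
proof -
  have "off ns i + ns ! i = (\<Sum>k<Suc i. ns ! k)" using assms by (simp add: off_eq_sum)
  also have "\<dots> \<le> (\<Sum>k<j. ns ! k)" by (rule sum_mono2) (use assms in auto)
  finally show ?thesis using assms by (simp add: off_eq_sum)
qed

lemma off_add_nth_le_sum_list: "i < length ns \<Longrightarrow> off ns i + ns ! i \<le> sum_list ns"
  using off_add_nth_le_off[of i "length ns" ns] by (simp add: off_def)

lemma off_add_lt_sum_list: "\<lbrakk>i < length ns; p < ns ! i\<rbrakk> \<Longrightarrow> off ns i + p < sum_list ns"
  using off_add_nth_le_sum_list[of i ns] by linarith

lemma off_add_neq:
  "\<lbrakk>i < length ns; j < length ns; i \<noteq> j; p < ns ! i; q < ns ! j\<rbrakk> \<Longrightarrow> off ns i + p \<noteq> off ns j + q"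
  by (metis add_less_cancel_left le_add1 less_le_trans linorder_neqE_nat nat_less_le
      off_add_nth_le_off order_le_less_trans)

lemma sum_lessThan_sum_blocks:
  fixes f :: "nat \<Rightarrow> nat" and g :: "nat \<Rightarrow> 'a::comm_monoid_add"
  shows "(\<Sum>x<(\<Sum>k<t. f k). g x) = (\<Sum>k<t. \<Sum>s<f k. g ((\<Sum>i<k. f i) + s))"
proof (induct t)
  case (Suc t)
  have "(\<Sum>x<a + b. g x) = (\<Sum>x<a. g x) + (\<Sum>s<b. g (a + s))" for a b :: nat
    by (induct b) (auto simp: add.assoc)
  then show ?case using Suc by simp
qed simp

lemma bent_replicate_one:
  "\<lbrakk>i < t; j < t\<rbrakk> \<Longrightarrow> bent (replicate t 1) m i j p q = (if p = 0 \<and> q = 0 then m $$ (i, j) else 0)"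
  unfolding bent_def off_def by (auto simp: sum_list_replicate less_imp_le)

lemma blk_eq_iff_bent:
  "\<lbrakk>ns ! i = ns ! i'; ns ! j = ns ! j'\<rbrakk> \<Longrightarrow>
    blk ns X i j = blk ns Y i' j' \<longleftrightarrow> (\<forall>p q. bent ns X i j p q = bent ns Y i' j' p q)"
  unfolding blk_def bent_def by (auto simp: mat_eq_iff)

lemma blk_eq_zero_iff_bent: "blk ns X i j = 0\<^sub>m (ns ! i) (ns ! j) \<longleftrightarrow> (\<forall>p q. bent ns X i j p q = 0)"
  unfolding blk_def bent_def by (auto simp: mat_eq_iff)

definition slice :: "nat list \<Rightarrow> 'a::zero mat \<Rightarrow> nat \<Rightarrow> nat \<Rightarrow> 'a mat" where
  "slice ns M p q = mat (length ns) (length ns) (\<lambda>(i, j). bent ns M i j p q)"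

definition solves_eqs :: "nat \<Rightarrow> (nat \<Rightarrow> nat \<Rightarrow> 'a::comm_ring_1) set \<Rightarrow> 'a mat \<Rightarrow> bool" where
  "solves_eqs t eqs m \<longleftrightarrow> (\<forall>c\<in>eqs. (\<Sum>i<t. \<Sum>j<t. c i j * m $$ (i, j)) = 0)"

lemma slice_index [simp]:
  "\<lbrakk>i < length ns; j < length ns\<rbrakk> \<Longrightarrow> slice ns M p q $$ (i, j) = bent ns M i j p q"
  "dim_row (slice ns M p q) = length ns" "dim_col (slice ns M p q) = length ns"
  unfolding slice_def by auto

lemma slice_carrier [simp]: "slice ns M p q \<in> carrier_mat (length ns) (length ns)"
  unfolding slice_def by auto

lemma solves_eqs_add:
  "\<lbrakk>solves_eqs t eqs A; solves_eqs t eqs B; A \<in> carrier_mat t t; B \<in> carrier_mat t t\<rbrakk>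
    \<Longrightarrow> solves_eqs t eqs (A + B)"
  unfolding solves_eqs_def by (simp add: distrib_left sum.distrib)

lemma solves_eqs_smult:
  assumes "solves_eqs t eqs A" "A \<in> carrier_mat t t"
  shows "solves_eqs t eqs (a \<cdot>\<^sub>m A)"
proof -
  have "(\<Sum>i<t. \<Sum>j<t. c i j * (a \<cdot>\<^sub>m A) $$ (i, j)) = a * (\<Sum>i<t. \<Sum>j<t. c i j * A $$ (i, j))" for c
    using assms(2) by (simp add: sum_distrib_left mult.left_commute)
  then show ?thesis using assms(1) unfolding solves_eqs_def by simp
qed

lemma blk_sol_iff_slices: "blk_sol ns eqs M \<longleftrightarrow> (\<forall>p q. solves_eqs (length ns) eqs (slice ns M p q))"
  unfolding blk_sol_def solves_eqs_def by auto

lemma blk_sol_replicate_one_iff: "blk_sol (replicate t 1) eqs m \<longleftrightarrow> solves_eqs t eqs m"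
proof -
  have "(\<Sum>i<t. \<Sum>j<t. c i j * bent (replicate t 1) m i j p q) =
     (if p = 0 \<and> q = 0 then (\<Sum>i<t. \<Sum>j<t. c i j * m $$ (i, j)) else 0)" for c p q
    by (auto simp: bent_replicate_one intro!: sum.neutral sum.cong)
  then show ?thesis unfolding blk_sol_def solves_eqs_def by auto
qed

lemma Mnn_replicate_one_iff: "m \<in> Mnn (replicate t 1) eqs \<longleftrightarrow> m \<in> carrier_mat t t \<and> solves_eqs t eqs m"
  unfolding Mnn_def by (simp add: blk_sol_replicate_one_iff sum_list_replicate)

lemma Mnn_iff_slices:
  "M \<in> Mnn ns eqs \<longleftrightarrow>
    M \<in> carrier_mat (sum_list ns) (sum_list ns) \<and> (\<forall>p q. slice ns M p q \<in> Mnn (replicate (length ns) 1) eqs)"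
  unfolding Mnn_replicate_one_iff by (auto simp: Mnn_def blk_sol_iff_slices)

definition compatible_strips :: "(nat \<times> nat) set \<Rightarrow> nat list \<Rightarrow> bool" where
  "compatible_strips E ns \<longleftrightarrow> (\<forall>(i, j)\<in>E. i < length ns \<and> j < length ns \<and> ns ! i = ns ! j)"

lemma red_alg_iff_bent:
  assumes E: "compatible_strips E ns"
  shows "M \<in> red_alg ns E eqs \<longleftrightarrow> M \<in> carrier_mat (sum_list ns) (sum_list ns) \<and>
    (\<forall>p q. (\<forall>i j. j < i \<and> i < length ns \<longrightarrow> bent ns M i j p q = 0) \<and>
           (\<forall>(i, j)\<in>E. bent ns M i i p q = bent ns M j j p q) \<and>
           solves_eqs (length ns) eqs (slice ns M p q))"
proof -
  have "(\<forall>(i, j)\<in>E. blk ns M i i = blk ns M j j) \<longleftrightarrow>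
        (\<forall>(i, j)\<in>E. \<forall>p q. bent ns M i i p q = bent ns M j j p q)"
    using E unfolding compatible_strips_def by (intro ball_cong refl) (auto simp: blk_eq_iff_bent)
  then show ?thesis
    unfolding red_alg_def blk_sol_iff_slices blk_eq_zero_iff_bent by blast
qed

lemma red_alg_carrier: "red_alg ns E eqs \<subseteq> carrier_mat (sum_list ns) (sum_list ns)"
  unfolding red_alg_def by auto

lemma Mnn_carrier: "Mnn ns eqs \<subseteq> carrier_mat (sum_list ns) (sum_list ns)"
  unfolding Mnn_def by auto

lemma bent_slice:
  "\<lbrakk>i < length ns; j < length ns\<rbrakk> \<Longrightarrow>
    bent (replicate (length ns) 1) (slice ns M p q) i j p' q' = (if p' = 0 \<and> q' = 0 then bent ns M i j p q else 0)"
  by (simp add: bent_replicate_one)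

lemma red_alg_iff_slices:
  assumes E: "compatible_strips E ns"
  shows "M \<in> red_alg ns E eqs \<longleftrightarrow>
    M \<in> carrier_mat (sum_list ns) (sum_list ns) \<and> (\<forall>p q. slice ns M p q \<in> red_alg (replicate (length ns) 1) E eqs)"
proof -
  let ?t = "length ns" and ?ones = "replicate (length ns) (1::nat)"
  have E1: "compatible_strips E ?ones"
    using E unfolding compatible_strips_def by auto
  have slice_slice: "slice ?ones (slice ns M p q) p' q' =
      (if p' = 0 \<and> q' = 0 then slice ns M p q else 0\<^sub>m ?t ?t)" for p q p' q'
    by (rule eq_matI) (auto simp: bent_replicate_one)
  have "slice ns M p q \<in> red_alg ?ones E eqs \<longleftrightarrow>
      (\<forall>i j. j < i \<and> i < ?t \<longrightarrow> bent ns M i j p q = 0) \<and>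
      (\<forall>(i, j)\<in>E. bent ns M i i p q = bent ns M j j p q) \<and> solves_eqs ?t eqs (slice ns M p q)" for p q
  proof -
    define cond where "cond p' q' \<longleftrightarrow>
      (\<forall>i j. j < i \<and> i < ?t \<longrightarrow> bent ?ones (slice ns M p q) i j p' q' = 0) \<and>
      (\<forall>(i, j)\<in>E. bent ?ones (slice ns M p q) i i p' q' = bent ?ones (slice ns M p q) j j p' q') \<and>
      solves_eqs ?t eqs (slice ?ones (slice ns M p q) p' q')" for p' q'
    have "cond p' q'" if "\<not> (p' = 0 \<and> q' = 0)" for p' q'
      using that E unfolding cond_def slice_slice solves_eqs_def compatible_strips_def
      by (auto simp: bent_replicate_one)
    then have cond_all: "(\<forall>p' q'. cond p' q') \<longleftrightarrow> cond 0 0" by metis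
    have E_diag: "(\<forall>(i, j)\<in>E. bent ?ones (slice ns M p q) i i 0 0 = bent ?ones (slice ns M p q) j j 0 0) \<longleftrightarrow>
        (\<forall>(i, j)\<in>E. bent ns M i i p q = bent ns M j j p q)"
      using E unfolding compatible_strips_def by (intro ball_cong refl) (auto simp: bent_slice)
    have "cond 0 0 \<longleftrightarrow> (\<forall>i j. j < i \<and> i < ?t \<longrightarrow> bent ns M i j p q = 0) \<and>
      (\<forall>(i, j)\<in>E. bent ns M i i p q = bent ns M j j p q) \<and> solves_eqs ?t eqs (slice ns M p q)"
      using E_diag unfolding cond_def slice_slice by (simp add: bent_slice)
    with cond_all show ?thesis
      unfolding red_alg_iff_bent[OF E1] cond_def by (simp add: sum_list_replicate)
  qed
  then show ?thesis unfolding red_alg_iff_bent[OF E] by auto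
qed

lemma red_alg_bent_diag:
  assumes E: "compatible_strips E ns" and M: "M \<in> red_alg ns E eqs" and ij: "(i, j) \<in> E"
  shows "bent ns M i i p q = bent ns M j j p q"
proof -
  have "blk ns M i i = blk ns M j j" using M ij unfolding red_alg_def by auto
  moreover have "ns ! i = ns ! j" using E ij unfolding compatible_strips_def by auto
  ultimately show ?thesis by (simp add: blk_eq_iff_bent)
qed

lemma bent_add:
  fixes A B :: "'a::comm_ring_1 mat"
  shows "\<lbrakk>A \<in> carrier_mat (sum_list ns) (sum_list ns); B \<in> carrier_mat (sum_list ns) (sum_list ns);
    i < length ns; j < length ns\<rbrakk> \<Longrightarrow> bent ns (A + B) i j p q = bent ns A i j p q + bent ns B i j p q"
  using off_add_nth_le_sum_list[of i ns] off_add_nth_le_sum_list[of j ns] by (auto simp: bent_def)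

lemma bent_smult:
  fixes A :: "'a::comm_ring_1 mat"
  shows "\<lbrakk>A \<in> carrier_mat (sum_list ns) (sum_list ns); i < length ns; j < length ns\<rbrakk> \<Longrightarrow>
    bent ns (a \<cdot>\<^sub>m A) i j p q = a * bent ns A i j p q"
  using off_add_nth_le_sum_list[of i ns] off_add_nth_le_sum_list[of j ns] by (auto simp: bent_def)

lemma slice_add:
  fixes A B :: "'a::comm_ring_1 mat"
  shows "\<lbrakk>A \<in> carrier_mat (sum_list ns) (sum_list ns); B \<in> carrier_mat (sum_list ns) (sum_list ns)\<rbrakk> \<Longrightarrow>
    slice ns (A + B) p q = slice ns A p q + slice ns B p q"
  by (rule eq_matI) (auto simp: bent_add)

lemma slice_smult:
  fixes A :: "'a::comm_ring_1 mat"
  shows "A \<in> carrier_mat (sum_list ns) (sum_list ns) \<Longrightarrow> slice ns (a \<cdot>\<^sub>m A) p q = a \<cdot>\<^sub>m slice ns A p q"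
  by (rule eq_matI) (auto simp: bent_smult)

lemma red_alg_add:
  assumes E: "compatible_strips E ns" and A: "A \<in> red_alg ns E eqs" and B: "B \<in> red_alg ns E eqs"
  shows "A + B \<in> red_alg ns E eqs"
proof -
  have carr: "A \<in> carrier_mat (sum_list ns) (sum_list ns)" "B \<in> carrier_mat (sum_list ns) (sum_list ns)"
    using A B red_alg_iff_bent[OF E] by auto
  have lower: "\<forall>i j. j < i \<and> i < length ns \<longrightarrow> bent ns (A + B) i j p q = 0" for p q
    using A B carr unfolding red_alg_iff_bent[OF E] by (simp add: bent_add)
  have diag: "\<forall>(i, j)\<in>E. bent ns (A + B) i i p q = bent ns (A + B) j j p q" for p q
  proof clarify
    fix i j assume ij: "(i, j) \<in> E"
    then have "i < length ns" "j < length ns" using E unfolding compatible_strips_def by auto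
    with ij show "bent ns (A + B) i i p q = bent ns (A + B) j j p q"
      using carr by (simp add: bent_add red_alg_bent_diag[OF E A ij] red_alg_bent_diag[OF E B ij])
  qed
  have "solves_eqs (length ns) eqs (slice ns (A + B) p q)" for p q
    using A B carr unfolding red_alg_iff_bent[OF E] by (simp add: slice_add solves_eqs_add)
  with carr lower diag show ?thesis unfolding red_alg_iff_bent[OF E] by simp
qed

lemma red_alg_smult:
  assumes E: "compatible_strips E ns" and A: "A \<in> red_alg ns E eqs"
  shows "a \<cdot>\<^sub>m A \<in> red_alg ns E eqs"
proof -
  have carr: "A \<in> carrier_mat (sum_list ns) (sum_list ns)"
    using A red_alg_iff_bent[OF E] by auto
  have lower: "\<forall>i j. j < i \<and> i < length ns \<longrightarrow> bent ns (a \<cdot>\<^sub>m A) i j p q = 0" for p q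
    using A carr unfolding red_alg_iff_bent[OF E] by (simp add: bent_smult)
  have diag: "\<forall>(i, j)\<in>E. bent ns (a \<cdot>\<^sub>m A) i i p q = bent ns (a \<cdot>\<^sub>m A) j j p q" for p q
  proof clarify
    fix i j assume ij: "(i, j) \<in> E"
    then have "i < length ns" "j < length ns" using E unfolding compatible_strips_def by auto
    with ij show "bent ns (a \<cdot>\<^sub>m A) i i p q = bent ns (a \<cdot>\<^sub>m A) j j p q"
      using carr by (simp add: bent_smult red_alg_bent_diag[OF E A ij])
  qed
  have "solves_eqs (length ns) eqs (slice ns (a \<cdot>\<^sub>m A) p q)" for p q
    using A carr unfolding red_alg_iff_bent[OF E] by (simp add: slice_smult solves_eqs_smult)
  with carr lower diag show ?thesis unfolding red_alg_iff_bent[OF E] by simp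
qed

lemma Mnn_add: "\<lbrakk>A \<in> Mnn ns eqs; B \<in> Mnn ns eqs\<rbrakk> \<Longrightarrow> A + B \<in> Mnn ns eqs"
  unfolding Mnn_def by (auto simp: blk_sol_iff_slices slice_add solves_eqs_add)

lemma zero_mem_Mnn: "0\<^sub>m (sum_list ns) (sum_list ns) \<in> Mnn ns eqs"
  unfolding Mnn_def blk_sol_def
  by (auto simp: bent_def off_add_lt_sum_list intro!: sum.neutral)

lemma bent_one:
  "\<lbrakk>i < length ns; j < length ns\<rbrakk> \<Longrightarrow>
    bent ns (1\<^sub>m (sum_list ns)) i j p q = (if i = j \<and> p = q \<and> p < ns ! i then 1 else 0)"
  using off_add_nth_le_sum_list[of i ns] off_add_nth_le_sum_list[of j ns] off_add_neq[of i ns j p q]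
  unfolding bent_def by (cases "i = j") auto

lemma one_mem_red_alg:
  assumes E: "compatible_strips E ns" and diag: "\<forall>c\<in>eqs. \<forall>i. c i i = 0"
  shows "1\<^sub>m (sum_list ns) \<in> red_alg ns E eqs"
proof -
  have "solves_eqs (length ns) eqs (slice ns (1\<^sub>m (sum_list ns)) p q)" for p q
    using diag unfolding solves_eqs_def by (auto simp: bent_one intro!: sum.neutral)
  moreover have "i < length ns \<and> j < length ns \<and> ns ! i = ns ! j" if "(i, j) \<in> E" for i j
    using E that unfolding compatible_strips_def by auto
  ultimately show ?thesis unfolding red_alg_iff_bent[OF E] by (auto simp: bent_one)
qed

section \<open>Finite sums of matrices and matrix algebras\<close>

definition mat_sum :: "nat \<Rightarrow> nat \<Rightarrow> (nat \<Rightarrow> 'a::comm_monoid_add mat) \<Rightarrow> 'a mat" where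
  "mat_sum n K X = mat n n (\<lambda>(i, j). \<Sum>k<K. X k $$ (i, j))"

lemma mat_sum_carrier [simp]: "mat_sum n K X \<in> carrier_mat n n"
  by (simp add: mat_sum_def)

lemma mat_sum_Suc_shift:
  assumes "\<And>k. X k \<in> carrier_mat n n"
  shows "mat_sum n (Suc K) X = X 0 + mat_sum n K (\<lambda>k. X (Suc k))"
  using assms by (intro eq_matI) (auto simp: mat_sum_def sum.lessThan_Suc_shift simp del: sum.lessThan_Suc)

lemma mat_sum_mem:
  assumes "R \<subseteq> carrier_mat n n" "0\<^sub>m n n \<in> R" "\<And>A B. \<lbrakk>A \<in> R; B \<in> R\<rbrakk> \<Longrightarrow> A + B \<in> R"
    and "\<And>k. k < K \<Longrightarrow> X k \<in> R"
  shows "mat_sum n K X \<in> R"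
  using assms(4)
proof (induct K)
  case 0
  have "mat_sum n 0 X = 0\<^sub>m n n" by (rule eq_matI) (auto simp: mat_sum_def)
  then show ?case using assms(2) by simp
next
  case (Suc K)
  have "X K \<in> carrier_mat n n" using Suc.prems assms(1) by blast
  then have "mat_sum n (Suc K) X = mat_sum n K X + X K"
    by (intro eq_matI) (auto simp: mat_sum_def)
  then show ?case using Suc assms(3) by simp
qed

lemma mult_mat_sum:
  fixes A :: "'a::comm_ring_1 mat"
  assumes A: "A \<in> carrier_mat n n" and X: "\<And>k. X k \<in> carrier_mat n n"
  shows "A * mat_sum n K X = mat_sum n K (\<lambda>k. A * X k)"
proof (rule eq_matI)
  fix i j assume "i < dim_row (mat_sum n K (\<lambda>k. A * X k))" "j < dim_col (mat_sum n K (\<lambda>k. A * X k))"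
  then have i: "i < n" and j: "j < n" by (auto simp: mat_sum_def)
  have "(A * mat_sum n K X) $$ (i, j) = (\<Sum>y<n. A $$ (i, y) * (\<Sum>k<K. X k $$ (y, j)))"
    using A i j by (auto simp: mat_sum_def scalar_prod_def atLeast0LessThan intro!: sum.cong)
  also have "\<dots> = (\<Sum>k<K. \<Sum>y<n. A $$ (i, y) * X k $$ (y, j))"
    by (simp add: sum_distrib_left sum.swap[of _ "{..<K}"])
  also have "\<dots> = mat_sum n K (\<lambda>k. A * X k) $$ (i, j)"
    using A i j
    by (auto simp: mat_sum_def scalar_prod_def atLeast0LessThan carrier_matD[OF X] intro!: sum.cong)
  finally show "(A * mat_sum n K X) $$ (i, j) = mat_sum n K (\<lambda>k. A * X k) $$ (i, j)" .
qed (use A in \<open>auto simp: mat_sum_def\<close>)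

lemma bent_mult:
  assumes A: "A \<in> carrier_mat (sum_list ns) (sum_list ns)" and B: "B \<in> carrier_mat (sum_list ns) (sum_list ns)"
    and i: "i < length ns" and j: "j < length ns"
  shows "bent ns (A * B) i j p q = (\<Sum>s<sum_list ns. \<Sum>k<length ns. bent ns A i k p s * bent ns B k j s q)"
proof (cases "p < ns ! i \<and> q < ns ! j")
  case True
  define g where "g z = A $$ (off ns i + p, z) * B $$ (z, off ns j + q)" for z
  have "bent ns (A * B) i j p q = (\<Sum>z<sum_list ns. g z)"
    using True A B off_add_lt_sum_list[OF i] off_add_lt_sum_list[OF j]
    by (auto simp: bent_def g_def scalar_prod_def atLeast0LessThan intro!: sum.cong)
  also have "\<dots> = (\<Sum>k<length ns. \<Sum>s<ns ! k. g ((\<Sum>i<k. ns ! i) + s))"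
    unfolding sum_list_eq_sum by (rule sum_lessThan_sum_blocks)
  also have "\<dots> = (\<Sum>k<length ns. \<Sum>s<ns ! k. bent ns A i k p s * bent ns B k j s q)"
    using True by (intro sum.cong refl) (simp add: g_def bent_def off_eq_sum)
  also have "\<dots> = (\<Sum>k<length ns. \<Sum>s<sum_list ns. bent ns A i k p s * bent ns B k j s q)"
  proof (rule sum.cong[OF refl], rule sum.mono_neutral_left)
    fix k assume "k \<in> {..<length ns}"
    then show "{..<ns ! k} \<subseteq> {..<sum_list ns}" using off_add_nth_le_sum_list[of k ns] by auto
  qed (auto simp: bent_def)
  finally show ?thesis by (rule trans) (rule sum.swap)
qed (auto simp: bent_def intro!: sum.neutral)

lemma slice_mult:
  "\<lbrakk>A \<in> carrier_mat (sum_list ns) (sum_list ns); B \<in> carrier_mat (sum_list ns) (sum_list ns)\<rbrakk> \<Longrightarrow>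
    slice ns (A * B) p q = mat_sum (length ns) (sum_list ns) (\<lambda>s. slice ns A p s * slice ns B s q)"
  by (rule eq_matI) (auto simp: bent_mult mat_sum_def scalar_prod_def atLeast0LessThan intro!: sum.cong)

lemma pow_mat_Suc_left: "S \<in> carrier_mat n n \<Longrightarrow> S ^\<^sub>m Suc k = S * S ^\<^sub>m k"
proof (induct k)
  case (Suc k)
  then have "S * S ^\<^sub>m Suc k = (S * S ^\<^sub>m k) * S"
    by (metis assoc_mult_mat pow_carrier_mat pow_mat.simps(2))
  then show ?case using Suc by simp
qed simp

text \<open>The coefficients of the dependency among the n * n + 1 powers form a kernel vector of the
  square matrix whose columns list the entries of the powers, padded by a zero row.\<close>
lemma powers_linearly_dependent:
  fixes S :: "'a::field mat"
  assumes S: "S \<in> carrier_mat n n"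
  shows "\<exists>v. (\<exists>k\<le>n * n. v k \<noteq> 0) \<and> mat_sum n (Suc (n * n)) (\<lambda>k. v k \<cdot>\<^sub>m S ^\<^sub>m k) = 0\<^sub>m n n"
proof -
  define N where "N = n * n"
  define A where "A = mat\<^sub>r (Suc N) (Suc N) (\<lambda>x. if x = N then 0\<^sub>v (Suc N)
    else vec (Suc N) (\<lambda>k. (S ^\<^sub>m k) $$ (x div n, x mod n)))"
  have "A \<in> carrier_mat (Suc N) (Suc N)" unfolding A_def by simp
  moreover have "det A = 0" unfolding A_def by (rule det_row_0) auto
  ultimately obtain v where v: "v \<in> carrier_vec (Suc N)" "v \<noteq> 0\<^sub>v (Suc N)" "A *\<^sub>v v = 0\<^sub>v (Suc N)"
    using det_0_iff_vec_prod_zero_field by blast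
  have "\<exists>k\<le>N. v $ k \<noteq> 0"
  proof (rule ccontr)
    assume "\<not> ?thesis"
    then have "v = 0\<^sub>v (Suc N)" using v(1) by (intro eq_vecI) auto
    then show False using v(2) by simp
  qed
  moreover have "(\<Sum>k<Suc N. v $ k * (S ^\<^sub>m k) $$ (p, q)) = 0" if p: "p < n" and q: "q < n" for p q
  proof -
    have "p * n + q < Suc p * n" using q by simp
    also have "\<dots> \<le> N" using p unfolding N_def by (intro mult_le_mono1) simp
    finally have x: "p * n + q < N" .
    have "(p * n + q) div n = p" "(p * n + q) mod n = q" using p q by auto
    then have "(A *\<^sub>v v) $ (p * n + q) = (\<Sum>k<Suc N. (S ^\<^sub>m k) $$ (p, q) * v $ k)"
      using x v(1) unfolding A_def by (auto simp: scalar_prod_def atLeast0LessThan intro!: sum.cong)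
    then show ?thesis using v(3) x by (simp add: mult.commute)
  qed
  then have "mat_sum n (Suc N) (\<lambda>k. v $ k \<cdot>\<^sub>m S ^\<^sub>m k) = 0\<^sub>m n n"
    using S by (intro eq_matI) (auto simp: mat_sum_def simp del: sum.lessThan_Suc)
  ultimately show ?thesis unfolding N_def by blast
qed

definition matrix_algebra :: "nat \<Rightarrow> 'a::comm_ring_1 mat set \<Rightarrow> bool" where
  "matrix_algebra n R \<longleftrightarrow> R \<subseteq> carrier_mat n n \<and> 1\<^sub>m n \<in> R \<and>
    (\<forall>A\<in>R. \<forall>B\<in>R. A + B \<in> R \<and> A * B \<in> R) \<and> (\<forall>a. \<forall>A\<in>R. a \<cdot>\<^sub>m A \<in> R)"

lemma matrix_algebraI:
  "\<lbrakk>R \<subseteq> carrier_mat n n; 1\<^sub>m n \<in> R; \<And>A B. \<lbrakk>A \<in> R; B \<in> R\<rbrakk> \<Longrightarrow> A + B \<in> R;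
    \<And>A B. \<lbrakk>A \<in> R; B \<in> R\<rbrakk> \<Longrightarrow> A * B \<in> R; \<And>a A. A \<in> R \<Longrightarrow> a \<cdot>\<^sub>m A \<in> R\<rbrakk>
    \<Longrightarrow> matrix_algebra n R"
  unfolding matrix_algebra_def by blast

lemma matrix_algebra_mat_sum:
  assumes R: "matrix_algebra n R" and X: "\<And>k. k < K \<Longrightarrow> X k \<in> R"
  shows "mat_sum n K X \<in> R"
proof (rule mat_sum_mem[OF _ _ _ X])
  have "0 \<cdot>\<^sub>m 1\<^sub>m n = (0\<^sub>m n n :: 'a mat)" by (rule eq_matI) auto
  then show "0\<^sub>m n n \<in> R" using R unfolding matrix_algebra_def by metis
qed (use R in \<open>auto simp: matrix_algebra_def\<close>)

lemma matrix_algebra_pow: "\<lbrakk>matrix_algebra n R; S \<in> R\<rbrakk> \<Longrightarrow> S ^\<^sub>m k \<in> R"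
  by (induct k) (auto simp: matrix_algebra_def subset_iff)

text \<open>If v 0 \<noteq> 0, multiplying the relation by B expresses B as a polynomial in S; otherwise the
  relation reads S * D = 0, and D = 0 is a shorter one.\<close>
lemma left_inverse_mem_matrix_algebra_of_dependent:
  fixes R :: "'a::field mat set"
  assumes R: "matrix_algebra n R" and S: "S \<in> R" and B: "B \<in> carrier_mat n n" "B * S = 1\<^sub>m n"
  shows "\<lbrakk>\<exists>k\<le>N. v k \<noteq> 0; mat_sum n (Suc N) (\<lambda>k. v k \<cdot>\<^sub>m S ^\<^sub>m k) = 0\<^sub>m n n\<rbrakk> \<Longrightarrow> B \<in> R"
proof (induct N arbitrary: v rule: less_induct)
  case (less N)
  have Sc: "S \<in> carrier_mat n n" using R S unfolding matrix_algebra_def by auto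
  define D where "D = mat_sum n N (\<lambda>k. v (Suc k) \<cdot>\<^sub>m S ^\<^sub>m k)"
  have D: "D \<in> carrier_mat n n" unfolding D_def by simp
  have "mat_sum n (Suc N) (\<lambda>k. v k \<cdot>\<^sub>m S ^\<^sub>m k) =
      v 0 \<cdot>\<^sub>m 1\<^sub>m n + mat_sum n N (\<lambda>k. v (Suc k) \<cdot>\<^sub>m S ^\<^sub>m Suc k)"
    using Sc by (subst mat_sum_Suc_shift[of _ n]) auto
  also have "\<dots> = v 0 \<cdot>\<^sub>m 1\<^sub>m n + mat_sum n N (\<lambda>k. S * (v (Suc k) \<cdot>\<^sub>m S ^\<^sub>m k))"
    using mult_smult_distrib[OF Sc pow_carrier_mat[OF Sc]]
    by (simp add: pow_mat_Suc_left[OF Sc] del: pow_mat.simps(2))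
  also have "\<dots> = v 0 \<cdot>\<^sub>m 1\<^sub>m n + S * D"
    using Sc unfolding D_def by (subst mult_mat_sum[of _ n]) auto
  finally have rel: "v 0 \<cdot>\<^sub>m 1\<^sub>m n + S * D = 0\<^sub>m n n" using less.prems(2) by simp
  have "B * (S * D) = (B * S) * D" using B(1) Sc D by (simp add: assoc_mult_mat)
  then have BSD: "B * (S * D) = D" using B(2) D by simp
  show "B \<in> R"
  proof (cases "v 0 = 0")
    case True
    have "0 \<cdot>\<^sub>m 1\<^sub>m n = (0\<^sub>m n n :: 'a mat)" by (rule eq_matI) auto
    then have "S * D = 0\<^sub>m n n" using rel True Sc D by simp
    then have "D = 0\<^sub>m n n" using BSD B by simp
    moreover obtain N' where "N = Suc N'" and "\<exists>k\<le>N'. v (Suc k) \<noteq> 0"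
      using less.prems(1) True by (metis Suc_le_mono le_0_eq not0_implies_Suc)
    ultimately show ?thesis using less.hyps[of N' "\<lambda>k. v (Suc k)"] unfolding D_def by simp
  next
    case False
    have "B * (v 0 \<cdot>\<^sub>m 1\<^sub>m n + S * D) = B * (v 0 \<cdot>\<^sub>m 1\<^sub>m n) + B * (S * D)"
      using B Sc D by (intro mult_add_distrib_mat) auto
    also have "\<dots> = v 0 \<cdot>\<^sub>m B + D"
      using B BSD by (simp add: mult_smult_distrib[OF B(1) one_carrier_mat])
    finally have "v 0 \<cdot>\<^sub>m B + D = 0\<^sub>m n n" using rel B by simp
    then have "B = (- inverse (v 0)) \<cdot>\<^sub>m D"
      using False B D by (auto simp: mat_eq_iff field_simps eq_neg_iff_add_eq_0)
    moreover have "D \<in> R"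
      unfolding D_def using R S by (intro matrix_algebra_mat_sum) (auto simp: matrix_algebra_def matrix_algebra_pow)
    ultimately show ?thesis using R unfolding matrix_algebra_def by simp
  qed
qed

lemma left_inverse_mem_matrix_algebra:
  fixes R :: "'a::field mat set"
  assumes "matrix_algebra n R" "S \<in> R" "B \<in> carrier_mat n n" "B * S = 1\<^sub>m n"
  shows "B \<in> R"
proof -
  have "S \<in> carrier_mat n n" using assms(1,2) unfolding matrix_algebra_def by auto
  then show ?thesis
    using powers_linearly_dependent left_inverse_mem_matrix_algebra_of_dependent[OF assms] by blast
qed

section \<open>Refinements of partitions\<close>

text \<open>In the refinement concat (map P [0..<length ns]) of a partition ns, strip i of ns is split
  into the strips P i, the first of which has index sub_base P i.\<close>
definition sub_base :: "(nat \<Rightarrow> nat list) \<Rightarrow> nat \<Rightarrow> nat" where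
  "sub_base P i = (\<Sum>k<i. length (P k))"

lemma length_concat_map_upt: "length (concat (map P [0..<i])) = sub_base P i"
  unfolding sub_base_def by (induct i) auto

lemma sum_list_concat_map_upt: "sum_list (concat (map P [0..<i])) = (\<Sum>k<i. sum_list (P k))"
  by (induct i) auto

lemma concat_map_upt_split:
  assumes "i < t"
  shows "concat (map P [0..<t]) = concat (map P [0..<i]) @ P i @ concat (map P [Suc i..<t])"
proof -
  have "[0..<t] = [0..<i] @ i # [Suc i..<t]" using assms
    by (metis less_imp_add_positive upt_add_eq_append upt_conv_Cons zero_le)
  then show ?thesis by simp
qed

lemma nth_concat_map_upt:
  assumes "i < t" "u < length (P i)"
  shows "concat (map P [0..<t]) ! (sub_base P i + u) = P i ! u"
  using assms by (subst concat_map_upt_split[of i t P]) (simp_all add: nth_append length_concat_map_upt)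

lemma off_concat_map_upt:
  assumes "i < t" "u \<le> length (P i)"
  shows "off (concat (map P [0..<t])) (sub_base P i + u) = (\<Sum>k<i. sum_list (P k)) + off (P i) u"
proof -
  have "take (sub_base P i + u) (concat (map P [0..<t])) = concat (map P [0..<i]) @ take u (P i)"
    using assms by (subst concat_map_upt_split[of i t P]) (simp_all add: length_concat_map_upt)
  then show ?thesis by (simp add: off_def sum_list_concat_map_upt)
qed

lemma sub_base_add_length_le:
  assumes "i < j"
  shows "sub_base P i + length (P i) \<le> sub_base P j"
proof -
  have "(\<Sum>k<Suc i. length (P k)) \<le> (\<Sum>k<j. length (P k))" using assms by (intro sum_mono2) auto
  then show ?thesis unfolding sub_base_def by simp
qed

lemma index_concat_map_upt_cases:
  assumes "a < length (concat (map P [0..<t]))"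
  obtains i u where "i < t" "u < length (P i)" "a = sub_base P i + u"
proof -
  have "\<exists>i<t. \<exists>u<length (P i). a = sub_base P i + u" using assms
  proof (induct t)
    case (Suc t)
    show ?case
    proof (cases "a < sub_base P t")
      case True
      then have "\<exists>i<t. \<exists>u<length (P i). a = sub_base P i + u"
        by (intro Suc.hyps) (simp add: length_concat_map_upt)
      then show ?thesis using less_SucI by blast
    next
      case False
      then have "a - sub_base P t < length (P t)" "a = sub_base P t + (a - sub_base P t)"
        using Suc.prems by (auto simp: length_concat_map_upt sub_base_def)
      then show ?thesis by blast
    qed
  qed simp
  then show ?thesis using that by blast
qed

lemma concat_map_upt_sub_base:
  "concat (map Q [0..<sub_base P t]) = concat (map (\<lambda>i. concat (map Q [sub_base P i..<sub_base P (Suc i)])) [0..<t])"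
proof (induct t)
  case (Suc t)
  have "sub_base P (Suc t) = sub_base P t + length (P t)" by (simp add: sub_base_def)
  then have "[0..<sub_base P (Suc t)] = [0..<sub_base P t] @ [sub_base P t..<sub_base P (Suc t)]"
    using upt_add_eq_append[of 0 "sub_base P t" "length (P t)"] by simp
  then show ?case using Suc by simp
qed (simp add: sub_base_def)

definition refinement :: "(nat \<times> nat) set \<Rightarrow> nat list \<Rightarrow> (nat \<Rightarrow> nat list) \<Rightarrow> nat list \<Rightarrow> bool" where
  "refinement E ns P ns1 \<longleftrightarrow> ns1 = concat (map P [0..<length ns]) \<and>
     (\<forall>i<length ns. sum_list (P i) = ns ! i) \<and> (\<forall>(i, j)\<in>E. P i = P j)"

context
  fixes E ns P ns1
  assumes P: "refinement E ns P ns1"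
begin

lemma refinement_off:
  assumes "i < length ns" "u \<le> length (P i)"
  shows "off ns1 (sub_base P i + u) = off ns i + off (P i) u"
proof -
  have "(\<Sum>k<i. sum_list (P k)) = off ns i"
    using P assms(1) by (simp add: refinement_def off_eq_sum)
  then show ?thesis using P assms by (simp add: refinement_def off_concat_map_upt)
qed

lemma refinement_nth: "\<lbrakk>i < length ns; u < length (P i)\<rbrakk> \<Longrightarrow> ns1 ! (sub_base P i + u) = P i ! u"
  using P by (simp add: refinement_def nth_concat_map_upt)

lemma refinement_length: "length ns1 = sub_base P (length ns)"
  using P by (simp add: refinement_def length_concat_map_upt)

lemma refinement_index_lt: "\<lbrakk>i < length ns; u < length (P i)\<rbrakk> \<Longrightarrow> sub_base P i + u < length ns1"
  using sub_base_add_length_le[of i "length ns" P] refinement_length by simp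

lemma refinement_sub_strip_le: "\<lbrakk>i < length ns; u < length (P i)\<rbrakk> \<Longrightarrow> off (P i) u + P i ! u \<le> ns ! i"
  using P off_add_nth_le_sum_list[of u "P i"] by (simp add: refinement_def)

lemma refinement_sum_list: "sum_list ns1 = sum_list ns"
proof -
  have "sum_list ns1 = (\<Sum>k<length ns. sum_list (P k))"
    using P by (simp add: refinement_def sum_list_concat_map_upt)
  also have "\<dots> = (\<Sum>k<length ns. ns ! k)"
    using P by (simp add: refinement_def)
  finally show ?thesis by (simp add: sum_list_eq_sum)
qed

lemma refinement_index_cases:
  assumes "a < length ns1"
  obtains i u where "i < length ns" "u < length (P i)" "a = sub_base P i + u"
proof -
  have "a < length (concat (map P [0..<length ns]))" using assms P by (simp add: refinement_def)
  then obtain i u where "i < length ns" "u < length (P i)" "a = sub_base P i + u"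
    by (rule index_concat_map_upt_cases)
  then show ?thesis by (rule that)
qed

lemma blk_refinement_entry:
  assumes i: "i < length ns" and j: "j < length ns" and u: "u < length (P i)" and v: "v < length (P j)"
    and p: "p < P i ! u" and q: "q < P j ! v"
  shows "blk ns1 X (sub_base P i + u) (sub_base P j + v) $$ (p, q) =
    bent ns X i j (off (P i) u + p) (off (P j) v + q)"
proof -
  have "off (P i) u + p < ns ! i" "off (P j) v + q < ns ! j"
    using refinement_sub_strip_le[OF i u] refinement_sub_strip_le[OF j v] p q by linarith+
  moreover have "off ns1 (sub_base P i + u) = off ns i + off (P i) u"
    "off ns1 (sub_base P j + v) = off ns j + off (P j) v"
    using refinement_off[OF i] refinement_off[OF j] u v by simp_all
  ultimately show ?thesis
    unfolding blk_def bent_def using p q refinement_nth[OF i u] refinement_nth[OF j v]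
    by (simp add: add.assoc)
qed

end

lemma refinement_singletons:
  assumes "compatible_strips E ns"
  shows "refinement E ns (\<lambda>i. [ns ! i]) ns"
proof -
  have "concat (map (\<lambda>i. [ns ! i]) [0..<length ns]) = ns"
    by (simp add: map_concat[symmetric] map_nth)
  moreover have "\<forall>(i, j)\<in>E. [ns ! i] = [ns ! j]"
    using assms unfolding compatible_strips_def by fastforce
  ultimately show ?thesis unfolding refinement_def by simp
qed

section \<open>Belitskii's algorithm\<close>

lemma sum_list_filter_nonzero: "sum_list (filter (\<lambda>x. x \<noteq> 0) xs) = sum_list (xs :: nat list)"
  by (induct xs) auto

lemma sum_list_concat_nat: "sum_list (concat xss) = sum_list (map sum_list (xss :: nat list list))"
  by (induct xss) auto

lemma sum_list_differences_telescope:
  fixes ms :: "nat list"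
  assumes "sorted_wrt (\<ge>) ms" "j < length ms"
  shows "sum_list (map (\<lambda>i. ms ! i - (if Suc i < length ms then ms ! Suc i else 0)) [j..<length ms]) = ms ! j"
  using assms(2)
proof (induct "length ms - j" arbitrary: j)
  case (Suc k)
  have upt: "[j..<length ms] = j # [Suc j..<length ms]" using Suc.prems by (simp add: upt_conv_Cons)
  show ?case
  proof (cases "Suc j < length ms")
    case True
    then have "ms ! Suc j \<le> ms ! j" using sorted_wrt_nth_less[OF assms(1), of j "Suc j"] by simp
    moreover have "sum_list (map (\<lambda>i. ms ! i - (if Suc i < length ms then ms ! Suc i else 0))
        [Suc j..<length ms]) = ms ! Suc j"
      using Suc.hyps(2) True by (intro Suc.hyps(1)) arith+
    ultimately show ?thesis using True unfolding upt by simp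
  next
    case False
    then show ?thesis using Suc.prems unfolding upt by simp
  qed
qed simp

lemma sum_list_std_part_block:
  assumes "sorted_wrt (\<ge>) ms"
  shows "sum_list (std_part_block ms) = sum_list ms"
proof -
  have "sum_list (std_part_block ms) = (\<Sum>j<length ms.
      sum_list (map (\<lambda>i. ms ! i - (if Suc i < length ms then ms ! Suc i else 0)) [j..<length ms]))"
    unfolding std_part_block_def sum_list_filter_nonzero by (rule sum_list_concat_map_upt)
  also have "\<dots> = (\<Sum>j<length ms. ms ! j)"
    using sum_list_differences_telescope[OF assms] by simp
  finally show ?thesis by (simp only: sum_list_eq_sum)
qed

lemma sum_list_std_part: "weyr_data ws \<Longrightarrow> sum_list (std_part ws) = dim_row (weyr_mat ws)"
  by (simp add: std_part_def weyr_mat_def weyr_data_def Let_def sum_list_concat_nat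
      sum_list_std_part_block o_def cong: map_cong)

lemma refine_singletons: "refine ns (\<lambda>i. [ns ! i]) = ns"
  unfolding refine_def by (simp add: map_concat[symmetric] map_nth)

definition admissible_parts :: "nat list \<Rightarrow> 'a mat set \<Rightarrow> (nat \<Rightarrow> nat list) \<Rightarrow> bool" where
  "admissible_parts ns L parts \<longleftrightarrow>
     (\<forall>a<length ns. sum_list (parts a) = ns ! a) \<and> (\<forall>a b. strip_eqv ns L a b \<longrightarrow> parts a = parts b)"

lemma admissible_parts_singletons: "admissible_parts ns L (\<lambda>i. [ns ! i])"
  unfolding admissible_parts_def strip_eqv_def by simp

lemma admissible_parts_if_strip_eqv:
  assumes "admissible_parts ns L parts" "sum_list X = ns ! l"
  shows "admissible_parts ns L (\<lambda>i. if strip_eqv ns L l i then X else parts i)"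
  using assms unfolding admissible_parts_def strip_eqv_def by auto

lemma bel_step_subset: "bel_step (ns, L, M) (ns', L', M') \<Longrightarrow> L' \<subseteq> L"
  by (cases rule: bel_step.cases) blast+

lemma bel_step_conjugate:
  "bel_step (ns, L, M) (ns', L', M') \<Longrightarrow>
    \<exists>S\<in>L. invertible_mat S \<and> M' \<in> carrier_mat (sum_list ns) (sum_list ns) \<and> S * M' = M * S"
  by (cases rule: bel_step.cases) blast+

lemma bel_step_refine:
  assumes "bel_step (ns, L, M) (ns', L', M')"
  shows "\<exists>parts. ns' = refine ns parts \<and> admissible_parts ns L parts"
  using assms
proof cases
  case case_I
  then have "ns' = refine ns (\<lambda>i. [ns ! i])" by (simp add: refine_singletons)
  then show ?thesis using admissible_parts_singletons by blast
next
  case (case_II l r S rho)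
  have "admissible_parts ns L (\<lambda>i. if strip_eqv ns L l i then filter (\<lambda>x. x \<noteq> 0) [rho, ns ! l - rho]
      else if strip_eqv ns L r i then filter (\<lambda>x. x \<noteq> 0) [ns ! r - rho, rho] else [ns ! i])"
    using case_II(8,9) by (intro admissible_parts_if_strip_eqv admissible_parts_singletons)
      (simp_all add: sum_list_filter_nonzero)
  with case_II(11) show ?thesis by blast
next
  case (case_III l r S ws)
  have "dim_row (blk ns M' l r) = ns ! l" by (simp add: blk_def)
  then have "sum_list (std_part ws) = ns ! l"
    using sum_list_std_part[OF case_III(8)] case_III(9) by simp
  then have "admissible_parts ns L (\<lambda>i. if strip_eqv ns L l i then std_part ws else [ns ! i])"
    by (intro admissible_parts_if_strip_eqv admissible_parts_singletons)
  with case_III(10) show ?thesis by blast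
qed

lemma block_order_eq_map: "block_order m = map (\<lambda>k. (m - 1 - k div m, k mod m)) [0..<m * m]"
proof -
  have gen: "concat (map (\<lambda>i. map (\<lambda>j. (i, j)) [0..<w]) (rev [0..<n])) =
    map (\<lambda>k. (n - 1 - k div w, k mod w)) [0..<n * w]" if w: "0 < w" for n w
  proof (induct n)
    case (Suc n)
    have "[0..<Suc n * w] = [0..<w] @ map (\<lambda>k. k + w) [0..<n * w]"
      using upt_add_eq_append[of 0 w "n * w"] by (simp add: map_add_upt add.commute)
    moreover have "map (\<lambda>k. (Suc n - 1 - k div w, k mod w)) (map (\<lambda>k. k + w) [0..<n * w]) =
        map (\<lambda>k. (n - 1 - k div w, k mod w)) [0..<n * w]"
      using w by (simp add: add.commute)
    moreover have "map (\<lambda>k. (Suc n - 1 - k div w, k mod w)) [0..<w] = map (\<lambda>j. (n, j)) [0..<w]"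
      by simp
    ultimately show ?case using Suc by simp
  qed simp
  show ?thesis
    unfolding block_order_def using gen[of m m] by (cases "m = 0") simp_all
qed

lemma length_block_order: "length (block_order m) = m * m"
  by (simp add: block_order_eq_map)

text \<open>Belitskii's algorithm visits the blocks in the order unk_less of the unknowns.\<close>
lemma first_nonstable_SomeD:
  assumes "first_nonstable ns L M = Some (l, r)"
  shows "l < length ns" "r < length ns" "\<not> stable ns L M l r"
    and "\<And>a b. \<lbrakk>a < length ns; b < length ns; unk_less (a, b) (l, r)\<rbrakk> \<Longrightarrow> stable ns L M a b"
proof -
  define m where "m = length ns"
  obtain i where i: "i < m * m" "(l, r) = block_order m ! i"
    "\<not> stable ns L M (fst (block_order m ! i)) (snd (block_order m ! i))"
    and before: "\<forall>j<i. stable ns L M (fst (block_order m ! j)) (snd (block_order m ! j))"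
    using assms unfolding first_nonstable_def find_Some_iff m_def length_block_order split_beta
    by blast
  then have m: "0 < m" by (cases m) auto
  have lr: "l = m - 1 - i div m" "r = i mod m"
    using i(1,2) by (simp_all add: block_order_eq_map)
  show "l < length ns" "r < length ns"
    using lr m unfolding m_def by auto
  show "\<not> stable ns L M l r"
    using i(2,3) by (metis fst_conv snd_conv)
  fix a b assume a: "a < length ns" and b: "b < length ns" and ab: "unk_less (a, b) (l, r)"
  define j where "j = (m - 1 - a) * m + b"
  have j_div: "j div m = m - 1 - a" "j mod m = b"
    using b m unfolding j_def m_def by (simp_all add: div_mult_self3)
  have "j < Suc (m - 1 - a) * m" using b unfolding j_def m_def by simp
  also have "\<dots> \<le> m * m" using a unfolding m_def by (intro mult_le_mono1) linarith
  finally have "block_order m ! j = (a, b)"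
    using j_div a by (simp add: block_order_eq_map m_def)
  moreover have "j < i"
  proof -
    have "i div m < m" using i(1) by (simp add: less_mult_imp_div_less)
    then have "m - 1 - l = i div m" using lr by linarith
    then have i_eq: "i = (m - 1 - l) * m + r"
      using lr by simp
    show ?thesis
    proof (cases "l < a")
      case True
      then have "Suc (m - 1 - a) \<le> m - 1 - l" using a unfolding m_def by linarith
      then have "Suc (m - 1 - a) * m \<le> (m - 1 - l) * m" by (rule mult_le_mono1)
      moreover have "j < Suc (m - 1 - a) * m" using b unfolding j_def m_def by simp
      ultimately show ?thesis unfolding i_eq by linarith
    next
      case False
      then show ?thesis using ab unfolding i_eq j_def unk_less_def by auto
    qed
  qed
  ultimately show "stable ns L M a b" using before by (metis fst_conv snd_conv)
qed

lemma strip_eqv_sub_strips: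
  assumes E: "compatible_strips E ns" and P: "refinement E ns P ns1" and L1: "L1 \<subseteq> red_alg ns E eqs"
    and ij: "(i, j) \<in> E" and u: "u < length (P i)"
  shows "strip_eqv ns1 L1 (sub_base P i + u) (sub_base P j + u)"
proof -
  have i: "i < length ns" and j: "j < length ns" using E ij unfolding compatible_strips_def by auto
  have Pij: "P i = P j" using P ij unfolding refinement_def by auto
  have uj: "u < length (P j)" using u Pij by simp
  have nth: "ns1 ! (sub_base P i + u) = P i ! u" "ns1 ! (sub_base P j + u) = P i ! u"
    using refinement_nth[OF P i u] refinement_nth[OF P j uj] Pij by simp_all
  have "blk ns1 S (sub_base P i + u) (sub_base P i + u) = blk ns1 S (sub_base P j + u) (sub_base P j + u)"
    if S: "S \<in> L1" for S
  proof (rule eq_matI)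
    fix p q assume "p < dim_row (blk ns1 S (sub_base P j + u) (sub_base P j + u))"
      "q < dim_col (blk ns1 S (sub_base P j + u) (sub_base P j + u))"
    then have p: "p < P i ! u" and q: "q < P i ! u" using nth by (auto simp: blk_def)
    have "blk ns1 S (sub_base P i + u) (sub_base P i + u) $$ (p, q) = bent ns S i i (off (P i) u + p) (off (P i) u + q)"
      by (rule blk_refinement_entry[OF P i i u u p q])
    also have "\<dots> = bent ns S j j (off (P j) u + p) (off (P j) u + q)"
      using red_alg_bent_diag[OF E subsetD[OF L1 S] ij] Pij by simp
    also have "\<dots> = blk ns1 S (sub_base P j + u) (sub_base P j + u) $$ (p, q)"
      using blk_refinement_entry[OF P j j uj uj, of p q S] p q Pij by simp
    finally show "blk ns1 S (sub_base P i + u) (sub_base P i + u) $$ (p, q) =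
      blk ns1 S (sub_base P j + u) (sub_base P j + u) $$ (p, q)" .
  qed (use nth in \<open>auto simp: blk_def\<close>)
  then show ?thesis
    unfolding strip_eqv_def using refinement_index_lt[OF P i u] refinement_index_lt[OF P j uj] nth by auto
qed

lemma refinement_refine:
  assumes E: "compatible_strips E ns" and P: "refinement E ns P ns1" and L1: "L1 \<subseteq> red_alg ns E eqs"
    and parts: "admissible_parts ns1 L1 parts"
  shows "refinement E ns (\<lambda>i. concat (map parts [sub_base P i..<sub_base P (Suc i)])) (refine ns1 parts)"
proof -
  define P' where "P' i = concat (map parts [sub_base P i..<sub_base P (Suc i)])" for i
  have shift: "[sub_base P i..<sub_base P (Suc i)] = map (\<lambda>u. sub_base P i + u) [0..<length (P i)]" for i
    by (simp add: sub_base_def map_add_upt[symmetric] add.commute)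
  have "refine ns1 parts = concat (map P' [0..<length ns])"
    unfolding refine_def refinement_length[OF P] P'_def by (rule concat_map_upt_sub_base)
  moreover have "sum_list (P' i) = ns ! i" if i: "i < length ns" for i
  proof -
    have "sum_list (P' i) = (\<Sum>u<length (P i). sum_list (parts (sub_base P i + u)))"
      unfolding P'_def shift map_map o_def by (rule sum_list_concat_map_upt)
    also have "\<dots> = (\<Sum>u<length (P i). P i ! u)"
      using parts refinement_index_lt[OF P i] refinement_nth[OF P i]
      unfolding admissible_parts_def by (intro sum.cong) auto
    also have "\<dots> = ns ! i" using P i by (simp add: refinement_def sum_list_eq_sum)
    finally show ?thesis .
  qed
  moreover have "P' i = P' j" if ij: "(i, j) \<in> E" for i j
  proof -
    have "P i = P j" using P ij unfolding refinement_def by auto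
    moreover have "parts (sub_base P i + u) = parts (sub_base P j + u)" if "u < length (P i)" for u
      using parts strip_eqv_sub_strips[OF E P L1 ij that] unfolding admissible_parts_def by blast
    ultimately show ?thesis
      unfolding P'_def shift map_map o_def by (intro arg_cong[where f = concat] map_cong) auto
  qed
  ultimately show ?thesis unfolding refinement_def P'_def by auto
qed

lemma unk_less_sub_strips:
  assumes "unk_less (i, j) (l, r)" "P i = P l" "P j = P r" "u < length (P l)" "v < length (P r)"
  shows "unk_less (sub_base P i + u, sub_base P j + v) (sub_base P l + u, sub_base P r + v)"
proof (cases "l < i")
  case True
  then show ?thesis using sub_base_add_length_le[OF True, of P] assms(4) unfolding unk_less_def by simp
next
  case False
  then have "i = l" "j < r" using assms(1) unfolding unk_less_def by auto
  then show ?thesis using sub_base_add_length_le[of j r P] assms(3,5) unfolding unk_less_def by simp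
qed

section \<open>Linear matrix problems\<close>

locale linear_matrix_problem =
  fixes t :: nat
    and E :: "(nat \<times> nat) set"
    and eqsG eqsM :: "(nat \<Rightarrow> nat \<Rightarrow> 'a::{field,linorder}) set"
    and Nd Nf :: "(nat \<times> nat) set"
    and c :: "nat \<times> nat \<Rightarrow> nat \<times> nat \<Rightarrow> 'a"
  assumes equiv: "equiv {0..<t} E"
    and eqsG_upper: "\<forall>e\<in>eqsG. \<forall>i j. e i j \<noteq> 0 \<longrightarrow> i < j"
    and G_mult: "\<forall>A\<in>red_alg (replicate t 1) E eqsG. \<forall>B\<in>red_alg (replicate t 1) E eqsG.
                   A * B \<in> red_alg (replicate t 1) E eqsG"
    and GM: "\<forall>A\<in>red_alg (replicate t 1) E eqsG. \<forall>B\<in>Mnn (replicate t 1) eqsM.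
                   A * B \<in> Mnn (replicate t 1) eqsM \<and> B * A \<in> Mnn (replicate t 1) eqsM"
    and NdNf: "Nd \<union> Nf = {0..<t} \<times> {0..<t}" "Nd \<inter> Nf = {}"
    and c_shape: "\<forall>(l, r)\<in>Nd. \<forall>i j. c (l, r) (i, j) \<noteq> 0 \<longrightarrow>
                   (i, j) \<in> Nf \<and> (i, l) \<in> E \<and> (j, r) \<in> E \<and> unk_less (i, j) (l, r)"
    and GJ: "Mnn (replicate t 1) eqsM = {m \<in> carrier_mat t t.
               \<forall>(l, r)\<in>Nd. m $$ (l, r) = (\<Sum>(i, j)\<in>Nf. c (l, r) (i, j) * m $$ (i, j))}"
begin

lemma E_subset: "E \<subseteq> {0..<t} \<times> {0..<t}"
  using equiv unfolding equiv_def refl_on_def by auto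

lemma eqsG_diag: "\<forall>e\<in>eqsG. \<forall>i. e i i = 0"
  using eqsG_upper by blast

lemma compatible_strips_step_seq: "step_seq t E ns \<Longrightarrow> compatible_strips E ns"
  using E_subset unfolding step_seq_def compatible_strips_def by auto

lemma matrix_algebra_red_alg_ones: "matrix_algebra t (red_alg (replicate t 1) E eqsG)"
proof -
  have E: "compatible_strips E (replicate t 1)"
    using E_subset unfolding compatible_strips_def by auto
  show ?thesis
    using one_mem_red_alg[OF E eqsG_diag] red_alg_carrier[of "replicate t 1" E eqsG]
    by (intro matrix_algebraI) (simp_all add: sum_list_replicate G_mult red_alg_add[OF E] red_alg_smult[OF E])
qed

lemma mat_sum_mem_Mnn_ones: "mat_sum t K X \<in> Mnn (replicate t 1) eqsM"
  if "\<And>k. k < K \<Longrightarrow> X k \<in> Mnn (replicate t 1) eqsM"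
  using that Mnn_carrier[of "replicate t 1" eqsM] zero_mem_Mnn[of "replicate t 1" eqsM]
  by (intro mat_sum_mem) (auto simp: sum_list_replicate Mnn_add)

lemma Nd_subset: "Nd \<subseteq> {0..<t} \<times> {0..<t}" and Nf_subset: "Nf \<subseteq> {0..<t} \<times> {0..<t}"
  using NdNf(1) by blast+

definition bel_invariant :: "nat list \<Rightarrow> nat list \<times> 'a mat set \<times> 'a mat \<Rightarrow> bool" where
  "bel_invariant ns st \<longleftrightarrow> (case st of (ns1, L1, M1) \<Rightarrow>
     (\<exists>P. refinement E ns P ns1) \<and> L1 \<subseteq> red_alg ns E eqsG \<and> M1 \<in> Mnn ns eqsM)"

context
  fixes ns :: "nat list"
  assumes ns: "step_seq t E ns"
begin

lemma length_ns: "length ns = t"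
  using ns unfolding step_seq_def by simp

lemma matrix_algebra_red_alg: "matrix_algebra (sum_list ns) (red_alg ns E eqsG)"
proof -
  note E = compatible_strips_step_seq[OF ns]
  note slices = red_alg_iff_slices[OF E, unfolded length_ns]
  have "A * B \<in> red_alg ns E eqsG" if A: "A \<in> red_alg ns E eqsG" and B: "B \<in> red_alg ns E eqsG" for A B
  proof -
    have carr: "A \<in> carrier_mat (sum_list ns) (sum_list ns)" "B \<in> carrier_mat (sum_list ns) (sum_list ns)"
      using A B red_alg_carrier by blast+
    have "slice ns A p s * slice ns B s q \<in> red_alg (replicate t 1) E eqsG" for p q s
      using A B G_mult unfolding slices by blast
    then have "slice ns (A * B) p q \<in> red_alg (replicate t 1) E eqsG" for p q
      unfolding slice_mult[OF carr] length_ns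
      by (blast intro: matrix_algebra_mat_sum[OF matrix_algebra_red_alg_ones])
    then show ?thesis unfolding slices using carr by simp
  qed
  then show ?thesis
    using one_mem_red_alg[OF E eqsG_diag] red_alg_carrier[of ns E eqsG]
    by (intro matrix_algebraI) (simp_all add: red_alg_add[OF E] red_alg_smult[OF E])
qed

lemma Mnn_mult_left: "\<lbrakk>A \<in> red_alg ns E eqsG; X \<in> Mnn ns eqsM\<rbrakk> \<Longrightarrow> A * X \<in> Mnn ns eqsM"
  and Mnn_mult_right: "\<lbrakk>A \<in> red_alg ns E eqsG; X \<in> Mnn ns eqsM\<rbrakk> \<Longrightarrow> X * A \<in> Mnn ns eqsM"
proof -
  assume A: "A \<in> red_alg ns E eqsG" and X: "X \<in> Mnn ns eqsM"
  have carr: "A \<in> carrier_mat (sum_list ns) (sum_list ns)" "X \<in> carrier_mat (sum_list ns) (sum_list ns)"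
    using A X red_alg_carrier Mnn_carrier by blast+
  have sA: "slice ns A p q \<in> red_alg (replicate t 1) E eqsG" for p q
    using A red_alg_iff_slices[OF compatible_strips_step_seq[OF ns]] length_ns by blast
  have sX: "slice ns X p q \<in> Mnn (replicate t 1) eqsM" for p q
    using X Mnn_iff_slices length_ns by blast
  have "slice ns (A * X) p q \<in> Mnn (replicate t 1) eqsM" "slice ns (X * A) p q \<in> Mnn (replicate t 1) eqsM"
    for p q
    unfolding slice_mult[OF carr] slice_mult[OF carr(2,1)] length_ns
    using sA sX GM by (blast intro: mat_sum_mem_Mnn_ones)+
  then show "A * X \<in> Mnn ns eqsM" "X * A \<in> Mnn ns eqsM"
    unfolding Mnn_iff_slices[of _ ns] length_ns using carr by simp_all
qed

lemma conjugate_mem_Mnn: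
  assumes S: "S \<in> red_alg ns E eqsG" "invertible_mat S" and X: "X \<in> Mnn ns eqsM"
    and M': "M' \<in> carrier_mat (sum_list ns) (sum_list ns)" and conj: "S * M' = X * S"
  shows "M' \<in> Mnn ns eqsM"
proof -
  define n where "n = sum_list ns"
  have Sc: "S \<in> carrier_mat n n" using S red_alg_carrier unfolding n_def by blast
  obtain B where SB: "S * B = 1\<^sub>m (dim_row S)" and BS: "B * S = 1\<^sub>m (dim_row B)"
    using S(2) unfolding invertible_mat_def inverts_mat_def by blast
  have "dim_col B = n" using arg_cong[OF SB, of dim_col] Sc by simp
  moreover have "dim_row B = n" using arg_cong[OF BS, of dim_col] Sc by simp
  ultimately have B: "B \<in> carrier_mat n n" "B * S = 1\<^sub>m n" using BS by auto
  have "B \<in> red_alg ns E eqsG"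
    using left_inverse_mem_matrix_algebra[OF matrix_algebra_red_alg S(1)] B unfolding n_def by blast
  moreover have "M' = B * (X * S)"
  proof -
    have Mc: "M' \<in> carrier_mat n n" using M' unfolding n_def .
    then have "M' = (B * S) * M'" using B(2) by simp
    also have "\<dots> = B * (S * M')" using B(1) Sc Mc by (simp add: assoc_mult_mat)
    finally show ?thesis using conj by simp
  qed
  ultimately show ?thesis using Mnn_mult_left Mnn_mult_right S(1) X by simp
qed

lemma dependent_combination_outside_block:
  assumes "(l, r) \<in> Nd" "\<not> (p < ns ! l \<and> q < ns ! r)"
  shows "(\<Sum>(i, j)\<in>Nf. c (l, r) (i, j) * bent ns M i j p q) = 0"
proof (rule sum.neutral, clarify)
  fix i j assume "(i, j) \<in> Nf"
  show "c (l, r) (i, j) * bent ns M i j p q = 0"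
  proof (cases "c (l, r) (i, j) = 0")
    case False
    then have "(i, l) \<in> E" "(j, r) \<in> E" using c_shape assms(1) by auto
    then have "ns ! i = ns ! l" "ns ! j = ns ! r" using ns unfolding step_seq_def by auto
    then show ?thesis using assms(2) unfolding bent_def by auto
  qed simp
qed

lemma slice_mem_Mnn_ones_iff:
  "slice ns M p q \<in> Mnn (replicate t 1) eqsM \<longleftrightarrow>
    (\<forall>(l, r)\<in>Nd. bent ns M l r p q = (\<Sum>(i, j)\<in>Nf. c (l, r) (i, j) * bent ns M i j p q))"
proof -
  have sums: "(\<Sum>(i, j)\<in>Nf. c (l, r) (i, j) * slice ns M p q $$ (i, j)) =
      (\<Sum>(i, j)\<in>Nf. c (l, r) (i, j) * bent ns M i j p q)" for l r
    using Nf_subset length_ns by (intro sum.cong) auto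
  have "(\<forall>(l, r)\<in>Nd. slice ns M p q $$ (l, r) =
        (\<Sum>(i, j)\<in>Nf. c (l, r) (i, j) * slice ns M p q $$ (i, j))) \<longleftrightarrow>
      (\<forall>(l, r)\<in>Nd. bent ns M l r p q = (\<Sum>(i, j)\<in>Nf. c (l, r) (i, j) * bent ns M i j p q))"
    unfolding sums using Nd_subset length_ns by (intro ball_cong refl) auto
  moreover have "slice ns M p q \<in> carrier_mat t t" using slice_carrier[of ns M p q] length_ns by simp
  ultimately show ?thesis unfolding GJ by simp
qed

lemma Mnn_iff_dependent:
  "M \<in> Mnn ns eqsM \<longleftrightarrow> M \<in> carrier_mat (sum_list ns) (sum_list ns) \<and>
    (\<forall>(l, r)\<in>Nd. \<forall>p < ns ! l. \<forall>q < ns ! r.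
      bent ns M l r p q = (\<Sum>(i, j)\<in>Nf. c (l, r) (i, j) * bent ns M i j p q))"
proof -
  have "(\<forall>p q. \<forall>(l, r)\<in>Nd. bent ns M l r p q = (\<Sum>(i, j)\<in>Nf. c (l, r) (i, j) * bent ns M i j p q)) \<longleftrightarrow>
    (\<forall>(l, r)\<in>Nd. \<forall>p < ns ! l. \<forall>q < ns ! r.
      bent ns M l r p q = (\<Sum>(i, j)\<in>Nf. c (l, r) (i, j) * bent ns M i j p q))"
  proof (intro iffI allI ballI impI; clarify)
    fix p q l r
    assume H: "\<forall>(l, r)\<in>Nd. \<forall>p < ns ! l. \<forall>q < ns ! r.
      bent ns M l r p q = (\<Sum>(i, j)\<in>Nf. c (l, r) (i, j) * bent ns M i j p q)" and lr: "(l, r) \<in> Nd"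
    show "bent ns M l r p q = (\<Sum>(i, j)\<in>Nf. c (l, r) (i, j) * bent ns M i j p q)"
    proof (cases "p < ns ! l \<and> q < ns ! r")
      case True then show ?thesis using H lr by blast
    next
      case False
      then have "bent ns M l r p q = 0" unfolding bent_def by auto
      then show ?thesis using dependent_combination_outside_block[OF lr False] by simp
    qed
  qed blast
  then show ?thesis
    unfolding Mnn_iff_slices[of M ns] length_ns slice_mem_Mnn_ones_iff by simp
qed

lemma dependent_sub_block_entry:
  assumes P: "refinement E ns P ns1" and X: "X \<in> Mnn ns eqsM" and LR: "(L, R) \<in> Nd"
    and u: "u < length (P L)" and v: "v < length (P R)" and p: "p < P L ! u" and q: "q < P R ! v"
  shows "blk ns1 X (sub_base P L + u) (sub_base P R + v) $$ (p, q) =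
    (\<Sum>(i, j)\<in>Nf. c (L, R) (i, j) * blk ns1 X (sub_base P i + u) (sub_base P j + v) $$ (p, q))"
proof -
  have L: "L < length ns" and R: "R < length ns" using subsetD[OF Nd_subset LR] length_ns by auto
  define p' q' where "p' = off (P L) u + p" and "q' = off (P R) v + q"
  have "p' < ns ! L" "q' < ns ! R"
    using refinement_sub_strip_le[OF P L u] refinement_sub_strip_le[OF P R v] p q
    unfolding p'_def q'_def by linarith+
  moreover have "\<forall>p<ns ! L. \<forall>q<ns ! R. bent ns X L R p q = (\<Sum>(i, j)\<in>Nf. c (L, R) (i, j) * bent ns X i j p q)"
    using bspec[OF conjunct2[OF X[unfolded Mnn_iff_dependent]] LR] by simp
  ultimately have "bent ns X L R p' q' = (\<Sum>(i, j)\<in>Nf. c (L, R) (i, j) * bent ns X i j p' q')"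
    by blast
  then have "blk ns1 X (sub_base P L + u) (sub_base P R + v) $$ (p, q) =
      (\<Sum>(i, j)\<in>Nf. c (L, R) (i, j) * bent ns X i j p' q')"
    using blk_refinement_entry[OF P L R u v p q, of X] unfolding p'_def q'_def by simp
  also have "\<dots> = (\<Sum>(i, j)\<in>Nf. c (L, R) (i, j) * blk ns1 X (sub_base P i + u) (sub_base P j + v) $$ (p, q))"
  proof (rule sum.cong[OF refl], clarify)
    fix i j assume ij: "(i, j) \<in> Nf"
    show "c (L, R) (i, j) * bent ns X i j p' q' =
      c (L, R) (i, j) * blk ns1 X (sub_base P i + u) (sub_base P j + v) $$ (p, q)"
    proof (cases "c (L, R) (i, j) = 0")
      case False
      then have "(i, L) \<in> E" "(j, R) \<in> E" using c_shape LR by auto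
      then have "P i = P L" "P j = P R" using P unfolding refinement_def by auto
      moreover have "i < length ns" "j < length ns" using ij Nf_subset length_ns by auto
      ultimately show ?thesis
        using blk_refinement_entry[OF P, of i j u v p q X] u v p q unfolding p'_def q'_def by simp
    qed simp
  qed
  finally show ?thesis .
qed

lemma dependent_block_stable:
  assumes P: "refinement E ns P ns1" and L1: "L1 \<subseteq> red_alg ns E eqsG" and M1: "M1 \<in> Mnn ns eqsM"
    and LR: "(L, R) \<in> Nd" and u: "u < length (P L)" and v: "v < length (P R)"
    and earlier: "\<And>a b. \<lbrakk>a < length ns1; b < length ns1; unk_less (a, b) (sub_base P L + u, sub_base P R + v)\<rbrakk>
      \<Longrightarrow> stable ns1 L1 M1 a b"
  shows "stable ns1 L1 M1 (sub_base P L + u) (sub_base P R + v)"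
  unfolding stable_def
proof (intro ballI impI)
  fix S M' assume S: "S \<in> L1" and M'c: "M' \<in> carrier_mat (sum_list ns1) (sum_list ns1)"
    and conj: "invertible_mat S \<and> S * M' = M1 * S"
  have M': "M' \<in> Mnn ns eqsM"
    using conjugate_mem_Mnn[of S M1 M'] S L1 M1 M'c conj refinement_sum_list[OF P] by auto
  have L: "L < length ns" and R: "R < length ns" using subsetD[OF Nd_subset LR] length_ns by auto
  have free_stable: "blk ns1 M' (sub_base P i + u) (sub_base P j + v) = blk ns1 M1 (sub_base P i + u) (sub_base P j + v)"
    if "(i, j) \<in> Nf" "c (L, R) (i, j) \<noteq> 0" for i j
  proof -
    have "(i, L) \<in> E" "(j, R) \<in> E" "unk_less (i, j) (L, R)" using c_shape LR that by auto
    then have "P i = P L" "P j = P R" "unk_less (i, j) (L, R)" using P unfolding refinement_def by auto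
    moreover have "i < length ns" "j < length ns" using that Nf_subset length_ns by auto
    ultimately have "stable ns1 L1 M1 (sub_base P i + u) (sub_base P j + v)"
      using earlier refinement_index_lt[OF P] unk_less_sub_strips u v by metis
    then show ?thesis using S M'c conj unfolding stable_def by blast
  qed
  show "blk ns1 M' (sub_base P L + u) (sub_base P R + v) = blk ns1 M1 (sub_base P L + u) (sub_base P R + v)"
  proof (rule eq_matI)
    fix p q assume "p < dim_row (blk ns1 M1 (sub_base P L + u) (sub_base P R + v))"
      "q < dim_col (blk ns1 M1 (sub_base P L + u) (sub_base P R + v))"
    then have p: "p < P L ! u" and q: "q < P R ! v"
      using refinement_nth[OF P L u] refinement_nth[OF P R v] by (auto simp: blk_def)
    have "c (L, R) (i, j) * blk ns1 M' (sub_base P i + u) (sub_base P j + v) $$ (p, q) =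
      c (L, R) (i, j) * blk ns1 M1 (sub_base P i + u) (sub_base P j + v) $$ (p, q)" if "(i, j) \<in> Nf" for i j
      using free_stable[OF that] by (cases "c (L, R) (i, j) = 0") simp_all
    then show "blk ns1 M' (sub_base P L + u) (sub_base P R + v) $$ (p, q) =
      blk ns1 M1 (sub_base P L + u) (sub_base P R + v) $$ (p, q)"
      unfolding dependent_sub_block_entry[OF P M' LR u v p q] dependent_sub_block_entry[OF P M1 LR u v p q]
      by (intro sum.cong refl) auto
  qed (simp_all add: blk_def)
qed

lemma bel_invariant_step:
  assumes inv: "bel_invariant ns (ns1, L1, M1)" and step: "bel_step (ns1, L1, M1) (ns2, L2, M2)"
  shows "bel_invariant ns (ns2, L2, M2)"
proof -
  obtain P where P: "refinement E ns P ns1" and L1: "L1 \<subseteq> red_alg ns E eqsG" and M1: "M1 \<in> Mnn ns eqsM"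
    using inv unfolding bel_invariant_def by auto
  obtain S where S: "S \<in> L1" "invertible_mat S" and M2: "M2 \<in> carrier_mat (sum_list ns1) (sum_list ns1)"
    and conj: "S * M2 = M1 * S"
    using bel_step_conjugate[OF step] by blast
  have "M2 \<in> Mnn ns eqsM"
    using conjugate_mem_Mnn[OF _ S(2) M1 _ conj] S(1) L1 M2 refinement_sum_list[OF P] by auto
  moreover obtain parts where "ns2 = refine ns1 parts" "admissible_parts ns1 L1 parts"
    using bel_step_refine[OF step] by blast
  then have "\<exists>P'. refinement E ns P' ns2"
    using refinement_refine[OF compatible_strips_step_seq[OF ns] P L1] by blast
  ultimately show ?thesis using L1 bel_step_subset[OF step] unfolding bel_invariant_def by auto
qed

lemma bel_invariant_reachable:
  assumes "M \<in> Mnn ns eqsM" and "bel_step\<^sup>*\<^sup>* (ns, red_alg ns E eqsG, M) st"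
  shows "bel_invariant ns st"
  using assms(2)
proof (induct rule: rtranclp_induct)
  case base
  then show ?case
    using refinement_singletons[OF compatible_strips_step_seq[OF ns]] assms(1)
    unfolding bel_invariant_def by auto
next
  case (step y z)
  then show ?case using bel_invariant_step by (metis prod_cases3)
qed

lemma first_nonstable_in_free_block:
  assumes inv: "bel_invariant ns (ns1, L1, M1)" and first: "first_nonstable ns1 L1 M1 = Some (l, r)"
  shows "\<exists>(i, j)\<in>Nf. off ns i \<le> off ns1 l \<and> off ns1 l + ns1 ! l \<le> off ns i + ns ! i \<and>
                       off ns j \<le> off ns1 r \<and> off ns1 r + ns1 ! r \<le> off ns j + ns ! j"
proof -
  obtain P where P: "refinement E ns P ns1" and L1: "L1 \<subseteq> red_alg ns E eqsG" and M1: "M1 \<in> Mnn ns eqsM"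
    using inv unfolding bel_invariant_def by auto
  note first = first_nonstable_SomeD[OF first]
  obtain L u where L: "L < length ns" and u: "u < length (P L)" and l: "l = sub_base P L + u"
    using refinement_index_cases[OF P first(1)] by blast
  obtain R v where R: "R < length ns" and v: "v < length (P R)" and r: "r = sub_base P R + v"
    using refinement_index_cases[OF P first(2)] by blast
  have "(L, R) \<notin> Nd"
    using dependent_block_stable[OF P L1 M1 _ u v first(4)[unfolded l r]] first(3) unfolding l r by blast
  moreover have "(L, R) \<in> {0..<t} \<times> {0..<t}" using L R length_ns by simp
  ultimately have "(L, R) \<in> Nf" using NdNf(1) by blast
  moreover have "off ns1 l = off ns L + off (P L) u" "off ns1 r = off ns R + off (P R) v"
    using refinement_off[OF P L] refinement_off[OF P R] u v unfolding l r by simp_all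
  moreover have "ns1 ! l = P L ! u" "ns1 ! r = P R ! v"
    using refinement_nth[OF P L u] refinement_nth[OF P R v] unfolding l r by simp_all
  ultimately show ?thesis
    using refinement_sub_strip_le[OF P L u] refinement_sub_strip_le[OF P R v]
    by (intro bexI[of _ "(L, R)"]) auto
qed

end

end

theorem lemma2p2:
  fixes t :: nat
    and E :: "(nat \<times> nat) set"
    and eqsG eqsM :: "(nat \<Rightarrow> nat \<Rightarrow> 'a::{field,linorder}) set"
    and Nd Nf :: "(nat \<times> nat) set"
    and c :: "nat \<times> nat \<Rightarrow> nat \<times> nat \<Rightarrow> 'a"
  assumes closed: "alg_closed TYPE('a)"
    and equiv: "equiv {0..<t} E"
    and eqsG: "\<forall>e\<in>eqsG. one_class_pair E t e \<and> (\<forall>i j. e i j \<noteq> 0 \<longrightarrow> i < j)"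
    and G_mult: "\<forall>A\<in>red_alg (replicate t 1) E eqsG. \<forall>B\<in>red_alg (replicate t 1) E eqsG.
                   A * B \<in> red_alg (replicate t 1) E eqsG"
    and eqsM: "\<forall>e\<in>eqsM. one_class_pair E t e"
    and GM: "\<forall>A\<in>red_alg (replicate t 1) E eqsG. \<forall>B\<in>Mnn (replicate t 1) eqsM.
                   A * B \<in> Mnn (replicate t 1) eqsM \<and> B * A \<in> Mnn (replicate t 1) eqsM"
    and NdNf: "Nd \<union> Nf = {0..<t} \<times> {0..<t}" "Nd \<inter> Nf = {}"
    and c_shape: "\<forall>(l, r)\<in>Nd. \<forall>i j. c (l, r) (i, j) \<noteq> 0 \<longrightarrow>
                   (i, j) \<in> Nf \<and> (i, l) \<in> E \<and> (j, r) \<in> E \<and> unk_less (i, j) (l, r)"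
    and GJ: "Mnn (replicate t 1) eqsM = {m \<in> carrier_mat t t.
               \<forall>(l, r)\<in>Nd. m $$ (l, r) = (\<Sum>(i, j)\<in>Nf. c (l, r) (i, j) * m $$ (i, j))}"
  shows "(\<forall>ns. step_seq t E ns \<longrightarrow>
           Mnn ns eqsM = {M \<in> carrier_mat (sum_list ns) (sum_list ns).
              \<forall>(l, r)\<in>Nd. \<forall>p < ns ! l. \<forall>q < ns ! r.
                bent ns M l r p q = (\<Sum>(i, j)\<in>Nf. c (l, r) (i, j) * bent ns M i j p q)}) \<and>
         (\<forall>ns M ns1 L1 M1 l r. step_seq t E ns \<longrightarrow> M \<in> Mnn ns eqsM \<longrightarrow>
           bel_step\<^sup>*\<^sup>* (ns, red_alg ns E eqsG, M) (ns1, L1, M1) \<longrightarrow>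
           first_nonstable ns1 L1 M1 = Some (l, r) \<longrightarrow>
           (\<exists>(i, j)\<in>Nf. off ns i \<le> off ns1 l \<and> off ns1 l + ns1 ! l \<le> off ns i + ns ! i \<and>
                         off ns j \<le> off ns1 r \<and> off ns1 r + ns1 ! r \<le> off ns j + ns ! j))"
proof -
  interpret linear_matrix_problem t E eqsG eqsM Nd Nf c
    using equiv eqsG G_mult GM NdNf c_shape GJ by unfold_locales auto
  show ?thesis
    using Mnn_iff_dependent first_nonstable_in_free_block bel_invariant_reachable by blast
qed

end
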